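(* Let $\epsilon>0$, $s>0$, and $t=\frac{\epsilon^4}{900s^2}$. Let $f:\mathbb{R}^n\to\{-1,1\}$ be $((\epsilon/30)^2,s)$-smooth. Then $\mathbf{E}_{x\sim\gamma_n}[|P_tf(x)-f(x)|^2]\le\frac{\epsilon^2}{5}$.
   Context: $\gamma_n$ is the standard Gaussian measure; $P_tf(x)=\mathbf{E}_{z\sim\gamma_n}[f(e^{-t}x+\sqrt{1-e^{-2t}}z)]$. A function $f:\mathbb{R}^n\to\{-1,1\}$ is $(\eta,s)$-smooth if there is $g:\mathbb{R}^n\to\{-1,1\}$ with $\mathbf{E}_{x\sim\gamma_n}[|f-g|]\le\eta$ and $\mathsf{surf}(g)\le s(1+\eta)$, where $\mathsf{surf}(g)=\Gamma(\{g=1\})$, $\Gamma(A)=\liminf_{\delta\to0}\gamma_n(A_\delta\setminus A)/\delta$, $A_\delta=\{x:d(x,A)\le\delta\}$. *)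

theory Defs
  imports "HOL-Probability.Probability"
begin

definition gauss :: "'a::euclidean_space measure" where
  "gauss = density lborel
     (\<lambda>x. ennreal (exp (- (norm x)\<^sup>2 / 2) / (2 * pi) powr (real DIM('a) / 2)))"

definition OU :: "real \<Rightarrow> ('a::euclidean_space \<Rightarrow> real) \<Rightarrow> 'a \<Rightarrow> real" where
  "OU t f x = (\<integral>z. f (exp (- t) *\<^sub>R x + sqrt (1 - exp (-2 * t)) *\<^sub>R z) \<partial>gauss)"

text \<open>Closed delta-neighbourhood A_delta = {x. d(x,A) \<le> delta}, with d(x,{}) = \<infinity>.\<close>
definition nbhd :: "'a::euclidean_space set \<Rightarrow> real \<Rightarrow> 'a set" where
  "nbhd A \<delta> = {x. A \<noteq> {} \<and> infdist x A \<le> \<delta>}"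

definition gsurf :: "'a::euclidean_space set \<Rightarrow> ereal" where
  "gsurf A = Liminf (at_right 0)
     (\<lambda>\<delta>. ereal (measure gauss (nbhd A \<delta> - A) / \<delta>))"

definition surf :: "('a::euclidean_space \<Rightarrow> real) \<Rightarrow> ereal" where
  "surf g = gsurf {x. g x = 1}"

definition smooth :: "real \<Rightarrow> real \<Rightarrow> ('a::euclidean_space \<Rightarrow> real) \<Rightarrow> bool" where
  "smooth \<eta> s f \<longleftrightarrow> (\<exists>g. g \<in> borel_measurable borel \<and> (\<forall>x. g x \<in> {-1, 1}) \<and>
      (\<integral>x. \<bar>f x - g x\<bar> \<partial>gauss) \<le> \<eta> \<and> surf g \<le> ereal (s * (1 + \<eta>)))"

end

(*
  Write exp (-t) = cos theta.  Then P_t f x = E f (x cos theta + z sin theta) for an independent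
  standard Gaussian z, so E |P_t f - f| is at most the rotation modulus
  E |f (x cos theta + z sin theta) - f x| of f.  The law of the pair (x, z) is invariant under
  rotations, which makes the modulus subadditive in theta, hence at most theta times its
  derivative at 0.  For the indicator of a set A this derivative is bounded by the Gaussian surface
  area of A: replace the indicator by the (1/delta)-Lipschitz cutoff max 0 (1 - d(x, A)/delta),
  smooth it by the Mehler operator, and bound the gradient of the result, via Gaussian integration
  by parts, by the mass of the boundary layer A_delta - A divided by delta.  Finally
  arccos (exp (-t)) <= sqrt (2 t), and (P_t f - f)^2 <= 2 |P_t f - f| since |f| = 1.
*)

theory Submission
  imports Defs
begin

section \<open>The standard Gaussian measure\<close>

definition gauss_density :: "'a::euclidean_space \<Rightarrow> real" where
  "gauss_density x = exp (- (norm x)\<^sup>2 / 2) / (2 * pi) powr (real DIM('a) / 2)"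

lemma gauss_eq_density: "gauss = density lborel (\<lambda>x. ennreal (gauss_density x))"
  unfolding gauss_def gauss_density_def ..

lemma gauss_density_pos: "0 < gauss_density x"
  unfolding gauss_density_def by simp

lemma borel_measurable_gauss_density [measurable]: "gauss_density \<in> borel_measurable borel"
  unfolding gauss_density_def by measurable

lemma gauss_density_eq_prod:
  "gauss_density (x::'a::euclidean_space) = (\<Prod>b\<in>Basis. std_normal_density (x \<bullet> b))"
proof -
  have n: "(norm x)\<^sup>2 = (\<Sum>b\<in>Basis. (x \<bullet> b)\<^sup>2)"
  proof -
    have "(norm x)\<^sup>2 = x \<bullet> x" by (rule power2_norm_eq_inner)
    also have "\<dots> = (\<Sum>b\<in>Basis. (x \<bullet> b) * (x \<bullet> b))" by (rule euclidean_inner)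
    finally show ?thesis by (simp add: power2_eq_square)
  qed
  have p: "(2 * pi) powr (real DIM('a) / 2) = sqrt (2 * pi) ^ DIM('a)"
    by (simp add: powr_half_sqrt[symmetric] powr_realpow[symmetric] powr_powr)
  have "(\<Prod>b\<in>Basis. std_normal_density (x \<bullet> b)) = (\<Prod>b\<in>(Basis::'a set). (1 / sqrt (2 * pi)) * exp (- (x \<bullet> b)\<^sup>2 / 2))"
    by (simp add: std_normal_density_def)
  also have "\<dots> = exp (\<Sum>b\<in>Basis. - (x \<bullet> b)\<^sup>2 / 2) / sqrt (2 * pi) ^ DIM('a)"
    by (simp add: exp_sum prod_dividef)
  also have "(\<Sum>b\<in>(Basis::'a set). - (x \<bullet> b)\<^sup>2 / 2) = - (norm x)\<^sup>2 / 2"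
    by (simp add: n sum_negf sum_divide_distrib)
  finally show ?thesis unfolding gauss_density_def p by simp
qed

lemma sets_gauss [measurable_cong, simp]: "sets gauss = sets borel"
  by (simp add: gauss_eq_density)

lemma space_gauss [simp]: "space gauss = UNIV"
  by (simp add: gauss_eq_density)

lemma prob_space_gauss: "prob_space (gauss :: 'a::euclidean_space measure)"
proof
  have "emeasure (gauss::'a measure) (space gauss)
      = (\<integral>\<^sup>+x. (\<Prod>b\<in>(Basis::'a set). ennreal (std_normal_density (x \<bullet> b))) \<partial>lborel)"
    by (simp add: gauss_eq_density emeasure_density gauss_density_eq_prod prod_ennreal)
  also have "\<dots> = (\<Prod>b\<in>(Basis::'a set). (\<integral>\<^sup>+x. ennreal (std_normal_density x) \<partial>lborel))"
    by (rule nn_integral_lborel_prod) auto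
  also have "\<dots> = 1"
    by (subst nn_integral_eq_integral) auto
  finally show "emeasure (gauss::'a measure) (space gauss) = 1" .
qed

interpretation gauss: prob_space "gauss :: 'a::euclidean_space measure"
  by (rule prob_space_gauss)

lemma measure_gauss_UNIV [simp]: "measure (gauss :: 'a::euclidean_space measure) UNIV = 1"
  using gauss.prob_space by simp

lemma (in prob_space) abs_integral_le_const:
  fixes f :: "'a \<Rightarrow> real"
  assumes "f \<in> borel_measurable M" and "\<And>x. x \<in> space M \<Longrightarrow> \<bar>f x\<bar> \<le> B"
  shows "\<bar>\<integral>x. f x \<partial>M\<bar> \<le> B"
proof -
  have "integrable M f"
    using assms by (intro integrable_const_bound[where B=B] AE_I2) auto
  then have "(\<integral>x. \<bar>f x\<bar> \<partial>M) \<le> B"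
    using assms by (intro integral_le_const AE_I2) auto
  then show ?thesis
    using integral_abs_bound[of M f] by linarith
qed

lemma abs_diff_le_twice: "\<bar>a\<bar> \<le> B \<Longrightarrow> \<bar>b\<bar> \<le> B \<Longrightarrow> \<bar>a - b\<bar> \<le> 2 * B" for a b B :: real
  by (auto simp: abs_le_iff)

lemma integrable_gauss_bounded:
  fixes k :: "'a::euclidean_space \<Rightarrow> real"
  assumes "k \<in> borel_measurable borel" and "\<And>x. \<bar>k x\<bar> \<le> B"
  shows "integrable gauss k"
  using assms by (intro gauss.integrable_const_bound[where B=B] AE_I2) auto

lemma gauss_density_diff:
  "gauss_density (y - v) = gauss_density y * exp (y \<bullet> v - (norm v)\<^sup>2 / 2)"
proof -
  have "(norm (y - v))\<^sup>2 = (norm y)\<^sup>2 - 2 * (y \<bullet> v) + (norm v)\<^sup>2"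
    by (simp add: power2_norm_eq_inner inner_diff_left inner_diff_right inner_commute)
  then have "- (norm (y - v))\<^sup>2 / 2 = - (norm y)\<^sup>2 / 2 + (y \<bullet> v - (norm v)\<^sup>2 / 2)"
    by (simp add: field_simps)
  then have "exp (- (norm (y - v))\<^sup>2 / 2) = exp (- (norm y)\<^sup>2 / 2) * exp (y \<bullet> v - (norm v)\<^sup>2 / 2)"
    by (simp add: exp_add[symmetric])
  then show ?thesis
    unfolding gauss_density_def by simp
qed

lemma integral_lborel_translate:
  fixes G :: "'a::euclidean_space \<Rightarrow> 'b::{banach, second_countable_topology}"
  assumes [measurable]: "G \<in> borel_measurable borel"
  shows "(\<integral>y. G (y + v) \<partial>lborel) = (\<integral>y. G y \<partial>lborel)"
proof -
  have "(\<integral>y. G y \<partial>lborel) = (\<integral>y. G y \<partial>(distr lborel borel ((+) v)))"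
    by (simp add: lborel_distr_plus)
  also have "\<dots> = (\<integral>y. G (v + y) \<partial>lborel)"
    by (subst integral_distr) auto
  finally show ?thesis
    by (simp add: add.commute)
qed

lemma integral_gauss_translate:
  fixes F :: "'a::euclidean_space \<Rightarrow> real"
  assumes [measurable]: "F \<in> borel_measurable borel"
  shows "(\<integral>y. F (y + v) \<partial>gauss) = (\<integral>y. F y * exp (y \<bullet> v - (norm v)\<^sup>2 / 2) \<partial>gauss)"
proof -
  have "(\<integral>y. F (y + v) \<partial>gauss) = (\<integral>y. gauss_density ((y + v) - v) * F (y + v) \<partial>lborel)"
    by (simp add: gauss_eq_density integral_density less_imp_le[OF gauss_density_pos])
  also have "\<dots> = (\<integral>y. gauss_density (y - v) * F y \<partial>lborel)"
    by (rule integral_lborel_translate[where G="\<lambda>y. gauss_density (y - v) * F y"]) measurable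
  also have "\<dots> = (\<integral>y. F y * exp (y \<bullet> v - (norm v)\<^sup>2 / 2) \<partial>gauss)"
    by (simp add: gauss_eq_density integral_density less_imp_le[OF gauss_density_pos]
        gauss_density_diff mult_ac)
  finally show ?thesis .
qed

lemma integral_gauss_exp_inner:
  "(\<integral>y. exp (y \<bullet> v - (norm v)\<^sup>2 / 2) \<partial>(gauss :: 'a::euclidean_space measure)) = 1"
proof -
  have "(\<integral>y. exp (y \<bullet> v - (norm v)\<^sup>2 / 2) \<partial>gauss) = (\<integral>y. 1 \<partial>(gauss :: 'a measure))"
    using integral_gauss_translate[of "\<lambda>_. 1" v] by simp
  then show ?thesis
    by simp
qed

lemma integrable_gauss_exp_inner: "integrable gauss (\<lambda>y::'a::euclidean_space. exp (y \<bullet> v))"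
proof -
  have "integrable gauss (\<lambda>y::'a. exp (y \<bullet> v - (norm v)\<^sup>2 / 2))"
    using integral_gauss_exp_inner[of v] not_integrable_integral_eq by fastforce
  then have "integrable gauss (\<lambda>y::'a. exp (y \<bullet> v - (norm v)\<^sup>2 / 2) * exp ((norm v)\<^sup>2 / 2))"
    by (rule integrable_mult_left)
  then show ?thesis
    by (simp add: exp_add[symmetric])
qed

lemma exp_norm_le_sum_exp_inner:
  fixes y :: "'a::euclidean_space"
  assumes "c \<ge> 0"
  shows "exp (c * norm y) \<le> (\<Sum>b\<in>Basis. exp (y \<bullet> ((c * DIM('a)) *\<^sub>R b)) + exp (y \<bullet> (- (c * DIM('a)) *\<^sub>R b)))"
proof -
  have "\<exists>b0\<in>Basis. \<forall>b\<in>Basis. \<bar>y \<bullet> b\<bar> \<le> \<bar>y \<bullet> b0\<bar>"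
  proof -
    have "Max ((\<lambda>b. \<bar>y \<bullet> b\<bar>) ` Basis) \<in> (\<lambda>b. \<bar>y \<bullet> b\<bar>) ` (Basis::'a set)"
      by (rule Max_in) simp_all
    then obtain b0 where b0: "b0 \<in> Basis" "Max ((\<lambda>b. \<bar>y \<bullet> b\<bar>) ` Basis) = \<bar>y \<bullet> b0\<bar>"
      by (rule imageE) simp
    have "\<forall>b\<in>Basis. \<bar>y \<bullet> b\<bar> \<le> \<bar>y \<bullet> b0\<bar>"
      unfolding b0(2)[symmetric] by simp
    then show ?thesis using b0(1) by blast
  qed
  then obtain b0 where b0: "b0 \<in> Basis" "\<And>b. b \<in> Basis \<Longrightarrow> \<bar>y \<bullet> b\<bar> \<le> \<bar>y \<bullet> b0\<bar>" by blast
  have "norm y \<le> (\<Sum>b\<in>Basis. \<bar>y \<bullet> b\<bar>)" by (rule norm_le_l1)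
  also have "\<dots> \<le> (\<Sum>b\<in>(Basis::'a set). \<bar>y \<bullet> b0\<bar>)" by (intro sum_mono b0)
  also have "\<dots> = DIM('a) * \<bar>y \<bullet> b0\<bar>" by simp
  finally have "c * norm y \<le> c * (DIM('a) * \<bar>y \<bullet> b0\<bar>)" using assms by (intro mult_left_mono) auto
  then have "exp (c * norm y) \<le> exp (c * DIM('a) * \<bar>y \<bullet> b0\<bar>)" by (simp add: mult.assoc)
  also have "\<dots> \<le> exp (y \<bullet> ((c * DIM('a)) *\<^sub>R b0)) + exp (y \<bullet> (- (c * DIM('a)) *\<^sub>R b0))"
  proof -
    have e: "y \<bullet> ((c * DIM('a)) *\<^sub>R b0) = c * DIM('a) * (y \<bullet> b0)" "y \<bullet> (- (c * DIM('a)) *\<^sub>R b0) = - (c * DIM('a) * (y \<bullet> b0))"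
      by simp_all
    have "exp (c * DIM('a) * \<bar>y \<bullet> b0\<bar>) = exp (c * DIM('a) * (y \<bullet> b0)) \<or> exp (c * DIM('a) * \<bar>y \<bullet> b0\<bar>) = exp (- (c * DIM('a) * (y \<bullet> b0)))"
      by (cases "y \<bullet> b0 \<ge> 0") simp_all
    moreover have "0 < exp (c * DIM('a) * (y \<bullet> b0))" "0 < exp (- (c * DIM('a) * (y \<bullet> b0)))" by simp_all
    ultimately show ?thesis unfolding e by linarith
  qed
  also have "\<dots> \<le> (\<Sum>b\<in>Basis. exp (y \<bullet> ((c * DIM('a)) *\<^sub>R b)) + exp (y \<bullet> (- (c * DIM('a)) *\<^sub>R b)))"
    using b0(1) by (intro member_le_sum add_nonneg_nonneg) simp_all
  finally show ?thesis .
qed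

lemma integrable_gauss_exp_norm: "integrable gauss (\<lambda>y::'a::euclidean_space. exp (c * norm y))"
proof (cases "c \<ge> 0")
  case True
  define F where "F = (\<lambda>y::'a. \<Sum>b\<in>Basis. exp (y \<bullet> ((c * DIM('a)) *\<^sub>R b)) + exp (y \<bullet> (- (c * DIM('a)) *\<^sub>R b)))"
  have int: "integrable gauss F"
    unfolding F_def by (intro Bochner_Integration.integrable_sum Bochner_Integration.integrable_add integrable_gauss_exp_inner)
  have le: "norm (exp (c * norm y)) \<le> norm (F y)" for y
    using exp_norm_le_sum_exp_inner[OF True, of y] abs_ge_self[of "F y"] unfolding F_def by simp
  show ?thesis
    by (rule Bochner_Integration.integrable_bound[OF int _ AE_I2[OF le]]) measurable
next
  case False
  then have le: "norm (exp (c * norm y)) \<le> norm (1::real)" for y :: 'a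
    by (simp add: mult_nonpos_nonneg)
  show ?thesis
    by (rule Bochner_Integration.integrable_bound[OF _ _ AE_I2[OF le]]) measurable
qed

lemma integrable_gauss_exp_bound:
  fixes H :: "'a::euclidean_space \<Rightarrow> real"
  assumes [measurable]: "H \<in> borel_measurable borel" and K: "\<And>y. \<bar>H y\<bar> \<le> C * exp (K * norm y)"
  shows "integrable gauss H"
proof (rule Bochner_Integration.integrable_bound[OF integrable_mult_right[OF integrable_gauss_exp_norm[of K]]])
  show "AE x in gauss. norm (H x) \<le> norm (C * exp (K * norm x))"
    using K by (intro AE_I2) (auto intro: order_trans[OF _ abs_ge_self])
qed measurable

lemma integrable_gauss_norm: "integrable (gauss::'a::euclidean_space measure) (\<lambda>y. norm y)"
proof -
  have le: "norm (norm y) \<le> norm (exp (1 * norm y))" for y::'a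
  proof -
    have "norm y \<le> exp (norm y)" using exp_ge_add_one_self[of "norm y"] by linarith
    then show ?thesis by simp
  qed
  show ?thesis
    by (rule Bochner_Integration.integrable_bound[OF integrable_gauss_exp_norm[of 1] _ AE_I2[OF le]]) measurable
qed

section \<open>Gaussian integration by parts\<close>

lemma abs_exp_minus_one_le: "\<bar>exp a - 1\<bar> \<le> \<bar>a\<bar> * exp \<bar>a\<bar>" for a :: real
proof (cases "a \<ge> 0")
  case True
  have "exp (-a) \<ge> 1 - a" using exp_ge_add_one_self[of "-a"] by simp
  then have "exp (-a) * exp a \<ge> (1 - a) * exp a" by (intro mult_right_mono) auto
  then have "1 \<ge> (1 - a) * exp a" by (simp add: exp_minus field_simps)
  then show ?thesis using True by (simp add: algebra_simps)
next
  case False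
  have "exp a \<ge> 1 + a" by (rule exp_ge_add_one_self)
  moreover have "exp a \<le> 1" using False by simp
  moreover have "1 \<le> exp \<bar>a\<bar>" by simp
  moreover have "\<bar>exp a - 1\<bar> = 1 - exp a" using \<open>exp a \<le> 1\<close> by simp
  ultimately have "\<bar>exp a - 1\<bar> \<le> \<bar>a\<bar>" using False by linarith
  also have "\<dots> \<le> \<bar>a\<bar> * exp \<bar>a\<bar>" using \<open>1 \<le> exp \<bar>a\<bar>\<close> by (simp add: mult_le_cancel_left1)
  finally show ?thesis .
qed

lemma abs_exp_shift_quotient_le:
  fixes y v :: "'a::real_inner"
  assumes "\<bar>h\<bar> \<le> 1" and "h \<noteq> 0"
  shows "\<bar>(exp (h * (y \<bullet> v) - h\<^sup>2 * ((norm v)\<^sup>2 / 2)) - 1) / h\<bar>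
    \<le> exp ((norm v)\<^sup>2 + 2 * norm v * norm y)"
proof -
  define a where "a = h * (y \<bullet> v) - h\<^sup>2 * ((norm v)\<^sup>2 / 2)"
  define c where "c = norm y * norm v + (norm v)\<^sup>2 / 2"
  have c_nonneg: "0 \<le> c"
    unfolding c_def by simp
  have "\<bar>h\<bar> * \<bar>h\<bar> \<le> \<bar>h\<bar> * 1"
    by (rule mult_left_mono) (use assms in auto)
  then have h_sq: "h\<^sup>2 \<le> \<bar>h\<bar>"
    by (simp add: power2_eq_square)
  have "\<bar>a\<bar> \<le> \<bar>h * (y \<bullet> v)\<bar> + \<bar>h\<^sup>2 * ((norm v)\<^sup>2 / 2)\<bar>"
    unfolding a_def by (rule abs_triangle_ineq4)
  also have "\<dots> = \<bar>h\<bar> * \<bar>y \<bullet> v\<bar> + h\<^sup>2 * ((norm v)\<^sup>2 / 2)"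
    by (simp add: abs_mult)
  also have "\<dots> \<le> \<bar>h\<bar> * (norm y * norm v) + \<bar>h\<bar> * ((norm v)\<^sup>2 / 2)"
    using h_sq Cauchy_Schwarz_ineq2[of y v] by (intro add_mono mult_left_mono mult_right_mono) auto
  also have "\<dots> = \<bar>h\<bar> * c"
    by (simp add: c_def distrib_left)
  finally have a_le: "\<bar>a\<bar> \<le> \<bar>h\<bar> * c" .
  have a_le_c: "\<bar>a\<bar> \<le> c"
    using a_le mult_left_le_one_le[OF c_nonneg abs_ge_zero assms(1)] by linarith
  have "c \<le> exp c"
    using exp_ge_add_one_self[of c] by linarith
  have "\<bar>a\<bar> / \<bar>h\<bar> \<le> c"
    using a_le assms(2) by (simp add: divide_le_eq mult.commute)
  have "\<bar>(exp a - 1) / h\<bar> \<le> \<bar>a\<bar> * exp \<bar>a\<bar> / \<bar>h\<bar>"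
    unfolding abs_divide by (intro divide_right_mono abs_exp_minus_one_le) simp
  also have "\<dots> = (\<bar>a\<bar> / \<bar>h\<bar>) * exp \<bar>a\<bar>"
    by simp
  also have "\<dots> \<le> c * exp c"
    using \<open>\<bar>a\<bar> / \<bar>h\<bar> \<le> c\<close> a_le_c c_nonneg by (intro mult_mono) auto
  also have "\<dots> \<le> exp c * exp c"
    using \<open>c \<le> exp c\<close> by (intro mult_right_mono) auto
  also have "\<dots> = exp ((norm v)\<^sup>2 + 2 * norm v * norm y)"
    unfolding c_def exp_add[symmetric] by (simp add: algebra_simps)
  finally show ?thesis
    unfolding a_def .
qed

lemma exp_shift_le:
  fixes y v :: "'a::real_inner"
  assumes "\<bar>h\<bar> \<le> 1"
  shows "exp (h * (y \<bullet> v) - h\<^sup>2 * ((norm v)\<^sup>2 / 2)) \<le> exp (norm v * norm y)"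
proof -
  have "h * (y \<bullet> v) \<le> \<bar>h\<bar> * \<bar>y \<bullet> v\<bar>"
    by (simp add: abs_mult[symmetric])
  also have "\<dots> \<le> 1 * (norm y * norm v)"
    using assms by (intro mult_mono Cauchy_Schwarz_ineq2) auto
  finally have "h * (y \<bullet> v) \<le> norm v * norm y"
    by (simp add: mult.commute)
  moreover have "0 \<le> h\<^sup>2 * ((norm v)\<^sup>2 / 2)"
    by simp
  ultimately have "h * (y \<bullet> v) - h\<^sup>2 * ((norm v)\<^sup>2 / 2) \<le> norm v * norm y"
    by linarith
  then show ?thesis
    by simp
qed

lemma tendsto_integral_gauss_shift_quotient:
  fixes H :: "'a::euclidean_space \<Rightarrow> real"
  assumes [measurable]: "H \<in> borel_measurable borel"
    and bound: "\<And>y. \<bar>H y\<bar> \<le> C * exp (K * norm y)"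
  shows "((\<lambda>h. \<integral>y. H y * ((exp (h * (y \<bullet> v) - h\<^sup>2 * ((norm v)\<^sup>2 / 2)) - 1) / h) \<partial>gauss)
    \<longlongrightarrow> (\<integral>y. H y * (y \<bullet> v) \<partial>gauss)) (at 0)"
proof -
  define E where "E h y = exp (h * (y \<bullet> v) - h\<^sup>2 * ((norm v)\<^sup>2 / 2))" for h and y :: 'a
  define W where "W y = C * exp ((norm v)\<^sup>2) * exp ((K + 2 * norm v) * norm y)" for y :: 'a
  have int_W: "integrable gauss W"
    unfolding W_def by (intro integrable_mult_right integrable_gauss_exp_norm)
  have dominated: "norm (H y * ((E h y - 1) / h)) \<le> W y" if "\<bar>h\<bar> \<le> 1" "h \<noteq> 0" for h y
  proof -
    have "\<bar>H y * ((E h y - 1) / h)\<bar> \<le> C * exp (K * norm y) * exp ((norm v)\<^sup>2 + 2 * norm v * norm y)"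
      unfolding abs_mult E_def using bound[of y] abs_exp_shift_quotient_le[OF that, of y v]
      by (intro mult_mono) (auto intro: order_trans[OF abs_ge_zero bound])
    also have "\<dots> = W y"
      unfolding W_def by (simp add: exp_add[symmetric] algebra_simps)
    finally show ?thesis
      by simp
  qed
  have quotient_lim: "((\<lambda>h. (E h y - 1) / h) \<longlongrightarrow> y \<bullet> v) (at 0)" for y
  proof -
    have "((\<lambda>h. E h y) has_real_derivative y \<bullet> v) (at 0)"
      unfolding E_def by (auto intro!: derivative_eq_intros)
    then show ?thesis
      by (simp add: DERIV_def E_def)
  qed
  have "((\<lambda>h. \<integral>y. H y * ((E h y - 1) / h) \<partial>gauss) \<longlongrightarrow> (\<integral>y. H y * (y \<bullet> v) \<partial>gauss))
      (at 0 within {-1<..<1})"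
    unfolding tendsto_at_iff_sequentially comp_def
  proof (intro allI impI)
    fix X :: "nat \<Rightarrow> real"
    assume X: "\<forall>i. X i \<in> {-1<..<1} - {0}" "X \<longlonglongrightarrow> 0"
    then have X_at: "filterlim X (at 0) sequentially"
      by (auto simp: filterlim_at)
    show "(\<lambda>i. \<integral>y. H y * ((E (X i) y - 1) / X i) \<partial>gauss) \<longlonglongrightarrow> (\<integral>y. H y * (y \<bullet> v) \<partial>gauss)"
    proof (rule integral_dominated_convergence[where w=W, OF _ _ int_W])
      show "AE y in gauss. (\<lambda>i. H y * ((E (X i) y - 1) / X i)) \<longlonglongrightarrow> H y * (y \<bullet> v)"
        by (intro AE_I2 tendsto_mult tendsto_const filterlim_compose[OF quotient_lim] X_at)
      show "AE y in gauss. norm (H y * ((E (X i) y - 1) / X i)) \<le> W y" for i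
        using X(1)[rule_format, of i] by (intro AE_I2 dominated) (auto simp: abs_le_iff)
    qed (simp_all add: E_def)
  qed
  moreover have "at (0::real) within {-1<..<1} = at 0"
    by (rule at_within_open) auto
  ultimately show ?thesis
    by (simp add: E_def)
qed

text \<open>Gaussian integration by parts, obtained by differentiating the Cameron--Martin formula.\<close>

lemma has_real_derivative_integral_gauss_translate:
  fixes H :: "'a::euclidean_space \<Rightarrow> real"
  assumes H [measurable]: "H \<in> borel_measurable borel"
    and bound: "\<And>y. \<bar>H y\<bar> \<le> C * exp (K * norm y)"
  shows "((\<lambda>h. \<integral>y. H (y + h *\<^sub>R v) \<partial>gauss) has_real_derivative (\<integral>y. H y * (y \<bullet> v) \<partial>gauss)) (at 0)"
proof -
  define E where "E h y = exp (h * (y \<bullet> v) - h\<^sup>2 * ((norm v)\<^sup>2 / 2))" for h and y :: 'a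
  have "0 \<le> C"
    using bound[of 0] abs_ge_zero[of "H 0"] by simp
  have translate: "(\<integral>y. H (y + h *\<^sub>R v) \<partial>gauss) = (\<integral>y. H y * E h y \<partial>gauss)" for h
    using integral_gauss_translate[OF H, of "h *\<^sub>R v"] by (simp add: E_def power_mult_distrib)
  have int_HE: "integrable gauss (\<lambda>y. H y * E h y)" if "\<bar>h\<bar> \<le> 1" for h
  proof (rule integrable_gauss_exp_bound[where C=C and K="K + norm v"])
    show "\<bar>H y * E h y\<bar> \<le> C * exp ((K + norm v) * norm y)" for y
      using mult_mono[OF bound exp_shift_le[OF that, of y v]] \<open>0 \<le> C\<close>
      by (simp add: E_def abs_mult distrib_right exp_add mult.assoc)
  qed (simp add: E_def)
  have "\<forall>\<^sub>F h in at 0. (\<integral>y. H y * ((E h y - 1) / h) \<partial>gauss)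
      = ((\<integral>y. H (y + (0 + h) *\<^sub>R v) \<partial>gauss) - (\<integral>y. H (y + 0 *\<^sub>R v) \<partial>gauss)) / h"
    unfolding eventually_at
  proof (intro exI[of _ 1] conjI ballI impI)
    fix h :: real
    assume "h \<noteq> 0 \<and> dist h 0 < 1"
    then have "\<bar>h\<bar> \<le> 1"
      by simp
    have "(\<integral>y. H y * ((E h y - 1) / h) \<partial>gauss) = (\<integral>y. (H y * E h y - H y) / h \<partial>gauss)"
      by (simp add: right_diff_distrib)
    also have "\<dots> = ((\<integral>y. H y * E h y \<partial>gauss) - (\<integral>y. H y \<partial>gauss)) / h"
      using int_HE[OF \<open>\<bar>h\<bar> \<le> 1\<close>] integrable_gauss_exp_bound[OF H bound] by simp
    finally show "(\<integral>y. H y * ((E h y - 1) / h) \<partial>gauss)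
      = ((\<integral>y. H (y + (0 + h) *\<^sub>R v) \<partial>gauss) - (\<integral>y. H (y + 0 *\<^sub>R v) \<partial>gauss)) / h"
      by (simp add: translate)
  qed simp
  with tendsto_integral_gauss_shift_quotient[OF H bound, of v] show ?thesis
    unfolding DERIV_def E_def by (rule Lim_transform_eventually)
qed

lemma abs_inner_le_exp_norm: "\<bar>y \<bullet> w\<bar> \<le> norm w * exp (norm y)"
proof -
  have "\<bar>y \<bullet> w\<bar> \<le> norm y * norm w"
    by (rule Cauchy_Schwarz_ineq2)
  also have "\<dots> \<le> exp (norm y) * norm w"
    using exp_ge_add_one_self[of "norm y"] by (intro mult_right_mono) (linarith, simp)
  finally show ?thesis
    by (simp add: mult.commute)
qed

lemma integral_gauss_inner_sq: "(\<integral>y. (y \<bullet> w)\<^sup>2 \<partial>gauss) = (norm w)\<^sup>2"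
  for w :: "'a::euclidean_space"
proof -
  have bound: "\<bar>y \<bullet> w\<bar> \<le> norm w * exp (1 * norm y)" for y :: 'a
    using abs_inner_le_exp_norm[of y w] by simp
  have "integrable gauss (\<lambda>y::'a. y \<bullet> w)"
    by (rule integrable_gauss_exp_bound[OF _ bound]) simp
  then have affine: "(\<integral>y. (y + h *\<^sub>R w) \<bullet> w \<partial>gauss) = (\<integral>y. y \<bullet> w \<partial>gauss) + h * (norm w)\<^sup>2" for h
    by (simp add: inner_add_left power2_norm_eq_inner)
  have "((\<lambda>h. \<integral>y. (y + h *\<^sub>R w) \<bullet> w \<partial>gauss) has_real_derivative (\<integral>y. (y \<bullet> w) * (y \<bullet> w) \<partial>gauss)) (at 0)"
    by (rule has_real_derivative_integral_gauss_translate[OF _ bound]) measurable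
  then have "((\<lambda>h. (\<integral>y. y \<bullet> w \<partial>gauss) + h * (norm w)\<^sup>2) has_real_derivative (\<integral>y. (y \<bullet> w) * (y \<bullet> w) \<partial>gauss)) (at 0)"
    by (simp only: affine)
  moreover have "((\<lambda>h. (\<integral>y. y \<bullet> w \<partial>gauss) + h * (norm w)\<^sup>2) has_real_derivative (norm w)\<^sup>2) (at 0)"
    by (auto intro!: derivative_eq_intros)
  ultimately show ?thesis
    by (simp add: DERIV_unique power2_eq_square)
qed

lemma integral_gauss_abs_inner_le: "(\<integral>y. \<bar>y \<bullet> w\<bar> \<partial>gauss) \<le> norm w"
  for w :: "'a::euclidean_space"
proof -
  have "\<bar>y \<bullet> w\<bar> \<le> norm w * exp (1 * norm y)" for y :: 'a
    using abs_inner_le_exp_norm[of y w] by simp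
  then have int: "integrable gauss (\<lambda>y::'a. \<bar>y \<bullet> w\<bar>)"
    by (intro integrable_gauss_exp_bound[where C="norm w" and K=1]) auto
  have "(\<bar>y \<bullet> w\<bar>)\<^sup>2 \<le> (norm w)\<^sup>2 * exp (2 * norm y)" for y :: 'a
  proof -
    have "(\<bar>y \<bullet> w\<bar>)\<^sup>2 \<le> (norm w * exp (norm y))\<^sup>2"
      using abs_inner_le_exp_norm[of y w] by (intro power_mono) auto
    moreover have "exp (2 * norm y) = exp (norm y) * exp (norm y)"
      by (simp add: exp_add[symmetric])
    ultimately show ?thesis
      by (simp add: power_mult_distrib power2_eq_square mult_ac)
  qed
  then have int_sq: "integrable gauss (\<lambda>y::'a. (\<bar>y \<bullet> w\<bar>)\<^sup>2)"
    by (intro integrable_gauss_exp_bound[where C="(norm w)\<^sup>2" and K=2]) auto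
  have "(\<integral>y. \<bar>y \<bullet> w\<bar> \<partial>gauss)\<^sup>2 \<le> (\<integral>y. (\<bar>y \<bullet> w\<bar>)\<^sup>2 \<partial>gauss)"
    using gauss.variance_eq[OF int int_sq] gauss.variance_positive[of "\<lambda>y. \<bar>y \<bullet> w\<bar>"] by simp
  also have "\<dots> = (norm w)\<^sup>2"
    by (simp add: integral_gauss_inner_sq)
  finally show ?thesis
    by (rule power2_le_imp_le) simp
qed

section \<open>Rotation invariance of a pair of independent Gaussians\<close>

lemma measurable_Pair_lborel:
  fixes f g :: "'b \<Rightarrow> 'a::euclidean_space"
  assumes "f \<in> borel_measurable M" "g \<in> borel_measurable M"
  shows "(\<lambda>p. (f p, g p)) \<in> measurable M (lborel \<Otimes>\<^sub>M lborel)"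
  using assms by (intro measurable_Pair) simp_all

lemma nn_integral_lborel_translate:
  fixes G :: "'a::euclidean_space \<Rightarrow> ennreal"
  assumes [measurable]: "G \<in> borel_measurable borel"
  shows "(\<integral>\<^sup>+y. G (y + v) \<partial>lborel) = (\<integral>\<^sup>+y. G y \<partial>lborel)"
proof -
  have "(\<integral>\<^sup>+y. G y \<partial>lborel) = (\<integral>\<^sup>+y. G y \<partial>(distr lborel borel ((+) v)))"
    by (simp add: lborel_distr_plus)
  also have "\<dots> = (\<integral>\<^sup>+y. G (v + y) \<partial>lborel)"
    by (subst nn_integral_distr) auto
  finally show ?thesis
    by (simp add: add.commute)
qed

lemma nn_integral_lborel_shear_fst:
  fixes G :: "'a::euclidean_space \<times> 'a \<Rightarrow> ennreal"
  assumes G [measurable]: "G \<in> borel_measurable (lborel \<Otimes>\<^sub>M lborel)"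
  shows "(\<integral>\<^sup>+p. G (fst p + c *\<^sub>R snd p, snd p) \<partial>(lborel \<Otimes>\<^sub>M lborel)) = (\<integral>\<^sup>+p. G p \<partial>(lborel \<Otimes>\<^sub>M lborel))"
proof -
  have [measurable]: "(\<lambda>p. G (fst p + c *\<^sub>R snd p, snd p)) \<in> borel_measurable (lborel \<Otimes>\<^sub>M lborel)"
    by (rule measurable_compose[OF measurable_Pair_lborel G]) measurable
  have "(\<integral>\<^sup>+p. G (fst p + c *\<^sub>R snd p, snd p) \<partial>(lborel \<Otimes>\<^sub>M lborel))
      = (\<integral>\<^sup>+z. (\<integral>\<^sup>+x. G (x + c *\<^sub>R z, z) \<partial>lborel) \<partial>lborel)"
    by (subst lborel_pair.nn_integral_snd[symmetric]) simp_all
  also have "\<dots> = (\<integral>\<^sup>+z. (\<integral>\<^sup>+x. G (x, z) \<partial>lborel) \<partial>lborel)"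
    by (intro nn_integral_cong nn_integral_lborel_translate[where G="\<lambda>x. G (x, z)" for z]) measurable
  also have "\<dots> = (\<integral>\<^sup>+p. G p \<partial>(lborel \<Otimes>\<^sub>M lborel))"
    by (subst lborel_pair.nn_integral_snd[symmetric, OF G]) simp
  finally show ?thesis .
qed

lemma nn_integral_lborel_shear_snd:
  fixes G :: "'a::euclidean_space \<times> 'a \<Rightarrow> ennreal"
  assumes G [measurable]: "G \<in> borel_measurable (lborel \<Otimes>\<^sub>M lborel)"
  shows "(\<integral>\<^sup>+p. G (fst p, snd p + c *\<^sub>R fst p) \<partial>(lborel \<Otimes>\<^sub>M lborel)) = (\<integral>\<^sup>+p. G p \<partial>(lborel \<Otimes>\<^sub>M lborel))"
proof -
  have [measurable]: "(\<lambda>p. G (fst p, snd p + c *\<^sub>R fst p)) \<in> borel_measurable (lborel \<Otimes>\<^sub>M lborel)"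
    by (rule measurable_compose[OF measurable_Pair_lborel G]) measurable
  have "(\<integral>\<^sup>+p. G (fst p, snd p + c *\<^sub>R fst p) \<partial>(lborel \<Otimes>\<^sub>M lborel))
      = (\<integral>\<^sup>+x. (\<integral>\<^sup>+z. G (x, z + c *\<^sub>R x) \<partial>lborel) \<partial>lborel)"
    by (subst lborel.nn_integral_fst[symmetric]) simp_all
  also have "\<dots> = (\<integral>\<^sup>+x. (\<integral>\<^sup>+z. G (x, z) \<partial>lborel) \<partial>lborel)"
    by (intro nn_integral_cong nn_integral_lborel_translate[where G="\<lambda>z. G (x, z)" for x]) measurable
  also have "\<dots> = (\<integral>\<^sup>+p. G p \<partial>(lborel \<Otimes>\<^sub>M lborel))"
    by (subst lborel.nn_integral_fst[symmetric, OF G]) simp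
  finally show ?thesis .
qed

definition rotation :: "real \<Rightarrow> real \<Rightarrow> 'a::real_vector \<times> 'a \<Rightarrow> 'a \<times> 'a" where
  "rotation c s p = (c *\<^sub>R fst p + s *\<^sub>R snd p, - s *\<^sub>R fst p + c *\<^sub>R snd p)"

lemma measurable_rotation [measurable]:
  "rotation c s \<in> measurable (lborel \<Otimes>\<^sub>M lborel) (lborel \<Otimes>\<^sub>M (lborel :: 'a::euclidean_space measure))"
  unfolding rotation_def by (rule measurable_Pair_lborel) measurable

text \<open>A rotation with \<open>s \<noteq> 0\<close> is the product of three shears.\<close>

lemma nn_integral_lborel_rotation:
  fixes G :: "'a::euclidean_space \<times> 'a \<Rightarrow> ennreal"
  assumes G[measurable]: "G \<in> borel_measurable (lborel \<Otimes>\<^sub>M lborel)"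
    and cs: "c\<^sup>2 + s\<^sup>2 = 1" "s \<noteq> 0"
  shows "(\<integral>\<^sup>+p. G (rotation c s p) \<partial>(lborel \<Otimes>\<^sub>M lborel)) = (\<integral>\<^sup>+p. G p \<partial>(lborel \<Otimes>\<^sub>M lborel))"
proof -
  define a where "a = (1 - c) / s"
  define b where "b = - s"
  define U where "U = (\<lambda>p::'a \<times> 'a. (fst p + a *\<^sub>R snd p, snd p))"
  define L where "L = (\<lambda>p::'a \<times> 'a. (fst p, snd p + b *\<^sub>R fst p))"
  have ab1: "1 + a * b = c" unfolding a_def b_def using cs by (simp add: field_simps)
  have ab2: "2 * a + a * a * b = s"
  proof -
    have "2 * a + a * a * b = (1 - c) * (1 + c) / s" unfolding a_def b_def using cs by (simp add: field_simps power2_eq_square)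
    also have "(1 - c) * (1 + c) = s * s" using cs by (simp add: algebra_simps power2_eq_square)
    finally show ?thesis using cs by simp
  qed
  have R: "rotation c s p = U (L (U p))" for p :: "'a \<times> 'a"
  proof -
    have "U (L (U p)) = ((1 + a * b) *\<^sub>R fst p + (2 * a + a * a * b) *\<^sub>R snd p, b *\<^sub>R fst p + (1 + a * b) *\<^sub>R snd p)"
      unfolding U_def L_def by (simp add: algebra_simps flip: scaleR_2)
    then show ?thesis unfolding rotation_def by (simp only: ab1 ab2) (simp add: b_def)
  qed
  have mU: "U \<in> measurable (lborel \<Otimes>\<^sub>M lborel) (lborel \<Otimes>\<^sub>M lborel)"
    unfolding U_def by (rule measurable_Pair_lborel) measurable
  have mL: "L \<in> measurable (lborel \<Otimes>\<^sub>M lborel) (lborel \<Otimes>\<^sub>M lborel)"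
    unfolding L_def by (rule measurable_Pair_lborel) measurable
  define G1 where "G1 = (\<lambda>r. G (U r))"
  define G2 where "G2 = (\<lambda>r. G1 (L r))"
  have mG1: "G1 \<in> borel_measurable (lborel \<Otimes>\<^sub>M lborel)" unfolding G1_def by (rule measurable_compose[OF mU G])
  have mG2: "G2 \<in> borel_measurable (lborel \<Otimes>\<^sub>M lborel)" unfolding G2_def by (rule measurable_compose[OF mL mG1])
  have "(\<integral>\<^sup>+p. G (rotation c s p) \<partial>(lborel \<Otimes>\<^sub>M lborel)) = (\<integral>\<^sup>+p. G2 (U p) \<partial>(lborel \<Otimes>\<^sub>M lborel))"
    by (simp add: R G1_def G2_def)
  also have "\<dots> = (\<integral>\<^sup>+p. G2 p \<partial>(lborel \<Otimes>\<^sub>M lborel))"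
    unfolding U_def by (rule nn_integral_lborel_shear_fst[OF mG2])
  also have "\<dots> = (\<integral>\<^sup>+p. G1 (L p) \<partial>(lborel \<Otimes>\<^sub>M lborel))"
    by (simp add: G2_def)
  also have "\<dots> = (\<integral>\<^sup>+p. G1 p \<partial>(lborel \<Otimes>\<^sub>M lborel))"
    unfolding L_def by (rule nn_integral_lborel_shear_snd[OF mG1])
  also have "\<dots> = (\<integral>\<^sup>+p. G (U p) \<partial>(lborel \<Otimes>\<^sub>M lborel))"
    by (simp add: G1_def)
  also have "\<dots> = (\<integral>\<^sup>+p. G p \<partial>(lborel \<Otimes>\<^sub>M lborel))"
    unfolding U_def by (rule nn_integral_lborel_shear_fst[OF G])
  finally show ?thesis .
qed

abbreviation gauss_pair :: "('a::euclidean_space \<times> 'a) measure" where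
  "gauss_pair \<equiv> gauss \<Otimes>\<^sub>M gauss"

interpretation gauss_pair: pair_prob_space "gauss :: 'a::euclidean_space measure" "gauss :: 'a measure"
  by unfold_locales

lemma sets_gauss_pair [measurable_cong]:
  "sets (gauss_pair :: ('a::euclidean_space \<times> 'a) measure) = sets (lborel \<Otimes>\<^sub>M lborel)"
  by (rule sets_pair_measure_cong) simp_all

lemma space_gauss_pair [simp]: "space (gauss_pair :: ('a::euclidean_space \<times> 'a) measure) = UNIV"
  by (simp add: space_pair_measure)

lemma gauss_pair_eq_density:
  "(gauss_pair :: ('a::euclidean_space \<times> 'a) measure)
    = density (lborel \<Otimes>\<^sub>M lborel) (\<lambda>(x, z). ennreal (gauss_density x) * ennreal (gauss_density z))"
  unfolding gauss_eq_density
  by (rule pair_measure_density)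
     (auto simp: gauss_eq_density[symmetric] intro: prob_space_imp_sigma_finite prob_space_gauss
       lborel.sigma_finite_measure_axioms)

lemma gauss_density_rotation:
  assumes "c\<^sup>2 + s\<^sup>2 = 1"
  shows "gauss_density (c *\<^sub>R x + s *\<^sub>R z) * gauss_density (- s *\<^sub>R x + c *\<^sub>R z) = gauss_density x * gauss_density (z::'a::euclidean_space)"
proof -
  have "(norm (c *\<^sub>R x + s *\<^sub>R z))\<^sup>2 + (norm (- s *\<^sub>R x + c *\<^sub>R z))\<^sup>2 = (c\<^sup>2 + s\<^sup>2) * ((norm x)\<^sup>2 + (norm z)\<^sup>2)"
    unfolding power2_norm_eq_inner
    by (simp add: inner_commute algebra_simps power2_eq_square)
  then have "exp (- (norm (c *\<^sub>R x + s *\<^sub>R z))\<^sup>2 / 2) * exp (- (norm (- s *\<^sub>R x + c *\<^sub>R z))\<^sup>2 / 2)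
      = exp (- (norm x)\<^sup>2 / 2) * exp (- (norm z)\<^sup>2 / 2)"
    unfolding exp_add[symmetric] using assms by (simp add: field_simps)
  then show ?thesis
    unfolding gauss_density_def by simp
qed

lemma distr_gauss_pair_rotation_nonzero:
  assumes cs: "c\<^sup>2 + s\<^sup>2 = 1" "s \<noteq> 0"
  shows "distr (gauss_pair :: ('a::euclidean_space \<times> 'a) measure) gauss_pair (rotation c s) = gauss_pair"
proof (rule measure_eqI)
  let ?\<Phi> = "\<lambda>(x, z). ennreal (gauss_density x) * ennreal (gauss_density (z::'a))"
  have \<Phi>_rotation: "?\<Phi> (rotation c s p) = ?\<Phi> p" for p
    using gauss_density_rotation[OF cs(1), of "fst p" "snd p"]
    by (cases p) (simp add: rotation_def ennreal_mult[symmetric] less_imp_le[OF gauss_density_pos])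
  fix A
  assume A: "A \<in> sets (distr (gauss_pair :: ('a \<times> 'a) measure) gauss_pair (rotation c s))"
  then have A': "A \<in> sets (lborel \<Otimes>\<^sub>M lborel)"
    using sets_gauss_pair by simp
  have "emeasure (distr (gauss_pair :: ('a \<times> 'a) measure) gauss_pair (rotation c s)) A
      = emeasure gauss_pair (rotation c s -` A)"
    using A by (subst emeasure_distr) auto
  also have "\<dots> = (\<integral>\<^sup>+p. ?\<Phi> p * indicator (rotation c s -` A) p \<partial>(lborel \<Otimes>\<^sub>M lborel))"
    unfolding gauss_pair_eq_density
  proof (rule emeasure_density)
    show "rotation c s -` A \<in> sets (lborel \<Otimes>\<^sub>M lborel)"
      using measurable_sets[OF measurable_rotation A', of c s] by (simp add: space_pair_measure)
  qed measurable
  also have "\<dots> = (\<integral>\<^sup>+p. (\<lambda>q. ?\<Phi> q * indicator A q) (rotation c s p) \<partial>(lborel \<Otimes>\<^sub>M lborel))"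
    by (intro nn_integral_cong) (simp add: \<Phi>_rotation split: split_indicator)
  also have "\<dots> = (\<integral>\<^sup>+q. ?\<Phi> q * indicator A q \<partial>(lborel \<Otimes>\<^sub>M lborel))"
    by (rule nn_integral_lborel_rotation[OF _ cs]) (use A' in measurable)
  also have "\<dots> = emeasure gauss_pair A"
    unfolding gauss_pair_eq_density by (rule emeasure_density[symmetric]) (use A' in measurable)
  finally show "emeasure (distr (gauss_pair :: ('a \<times> 'a) measure) gauss_pair (rotation c s)) A = emeasure gauss_pair A" .
qed simp

lemma distr_gauss_pair_rotation:
  assumes "c\<^sup>2 + s\<^sup>2 = 1"
  shows "distr (gauss_pair :: ('a::euclidean_space \<times> 'a) measure) gauss_pair (rotation c s) = gauss_pair"
proof (cases "s = 0")
  case False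
  with assms show ?thesis
    by (rule distr_gauss_pair_rotation_nonzero)
next
  case True
  then have "c = 1 \<or> c = -1"
    using assms by (simp add: power2_eq_1_iff)
  then show ?thesis
  proof
    assume "c = 1"
    then have "rotation c s = (\<lambda>p::'a \<times> 'a. p)"
      using True by (auto simp: rotation_def fun_eq_iff)
    then show ?thesis
      by simp
  next
    assume "c = -1"
    then have half_turn: "rotation c s = rotation 0 1 \<circ> rotation 0 1"
      using True by (auto simp: rotation_def fun_eq_iff)
    have "distr (gauss_pair :: ('a \<times> 'a) measure) gauss_pair (rotation c s)
        = distr (distr gauss_pair gauss_pair (rotation 0 1)) gauss_pair (rotation (0::real) 1)"
      unfolding half_turn by (rule distr_distr[symmetric]) measurable
    then show ?thesis
      by (simp add: distr_gauss_pair_rotation_nonzero)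
  qed
qed

lemma integral_gauss_pair_rotation:
  fixes F :: "'a::euclidean_space \<times> 'a \<Rightarrow> real"
  assumes "c\<^sup>2 + s\<^sup>2 = 1" and [measurable]: "F \<in> borel_measurable gauss_pair"
  shows "(\<integral>p. F (rotation c s p) \<partial>gauss_pair) = (\<integral>p. F p \<partial>gauss_pair)"
proof -
  have "(\<integral>p. F p \<partial>gauss_pair) = (\<integral>p. F p \<partial>(distr gauss_pair gauss_pair (rotation c s)))"
    by (simp add: distr_gauss_pair_rotation[OF assms(1)])
  also have "\<dots> = (\<integral>p. F (rotation c s p) \<partial>gauss_pair)"
    by (rule integral_distr) measurable
  finally show ?thesis ..
qed

lemma distr_gauss_pair_combination:
  assumes "c\<^sup>2 + s\<^sup>2 = 1"
  shows "distr (gauss_pair :: ('a::euclidean_space \<times> 'a) measure) gauss (\<lambda>p. c *\<^sub>R fst p + s *\<^sub>R snd p) = gauss"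
proof -
  have "distr (gauss_pair :: ('a \<times> 'a) measure) gauss (\<lambda>p. c *\<^sub>R fst p + s *\<^sub>R snd p)
      = distr (distr gauss_pair gauss_pair (rotation c s)) gauss fst"
    by (subst distr_distr) (simp_all add: rotation_def comp_def)
  also have "\<dots> = gauss"
    unfolding distr_gauss_pair_rotation[OF assms] by (rule gauss.distr_pair_fst)
  finally show ?thesis .
qed

lemma integral_gauss_pair_combination:
  fixes F :: "'a::euclidean_space \<Rightarrow> real"
  assumes "c\<^sup>2 + s\<^sup>2 = 1" and [measurable]: "F \<in> borel_measurable borel"
  shows "(\<integral>p. F (c *\<^sub>R fst p + s *\<^sub>R snd p) \<partial>gauss_pair) = (\<integral>x. F x \<partial>gauss)"
proof -
  have "(\<integral>x. F x \<partial>gauss) = (\<integral>x. F x \<partial>(distr gauss_pair gauss (\<lambda>p. c *\<^sub>R fst p + s *\<^sub>R snd p)))"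
    by (simp add: distr_gauss_pair_combination[OF assms(1)])
  also have "\<dots> = (\<integral>p. F (c *\<^sub>R fst p + s *\<^sub>R snd p) \<partial>gauss_pair)"
    by (rule integral_distr) measurable
  finally show ?thesis ..
qed

lemma integrable_gauss_pair_combination:
  fixes F :: "'a::euclidean_space \<Rightarrow> real"
  assumes "c\<^sup>2 + s\<^sup>2 = 1" and [measurable]: "F \<in> borel_measurable borel" and "integrable gauss F"
  shows "integrable gauss_pair (\<lambda>p. F (c *\<^sub>R fst p + s *\<^sub>R snd p))"
proof -
  have "integrable (distr gauss_pair gauss (\<lambda>p. c *\<^sub>R fst p + s *\<^sub>R snd p)) F"
    using assms by (simp add: distr_gauss_pair_combination)
  then show ?thesis
    by (subst (asm) integrable_distr_eq) measurable
qed

lemma integrable_gauss_pair_bounded: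
  fixes k :: "'a::euclidean_space \<times> 'a \<Rightarrow> real"
  assumes "k \<in> borel_measurable gauss_pair" and "\<And>p. \<bar>k p\<bar> \<le> B"
  shows "integrable gauss_pair k"
  using assms by (intro gauss_pair.integrable_const_bound[where B=B] AE_I2) auto

lemma integrable_gauss_pair_abs_diff:
  fixes k1 k2 :: "'a::euclidean_space \<Rightarrow> real"
  assumes [measurable]: "k1 \<in> borel_measurable borel" "k2 \<in> borel_measurable borel"
    "f \<in> borel_measurable gauss_pair" "g \<in> borel_measurable gauss_pair"
    and "\<And>x. \<bar>k1 x\<bar> \<le> B" "\<And>x. \<bar>k2 x\<bar> \<le> B"
  shows "integrable gauss_pair (\<lambda>p. \<bar>k1 (f p) - k2 (g p)\<bar>)"
  by (rule integrable_gauss_pair_bounded[where B="2 * B"]) (use assms(5,6) abs_diff_le_twice in auto)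

lemma integrable_gauss_pair_norm:
  "integrable gauss_pair (\<lambda>p::'a::euclidean_space \<times> 'a. norm (fst p))"
  "integrable gauss_pair (\<lambda>p::'a::euclidean_space \<times> 'a. norm (snd p))"
  using integrable_gauss_pair_combination[of 1 0 "norm :: 'a \<Rightarrow> real"]
    integrable_gauss_pair_combination[of 0 1 "norm :: 'a \<Rightarrow> real"]
  by (simp_all add: integrable_gauss_norm)

section \<open>The Mehler form of the Ornstein--Uhlenbeck semigroup and the rotation modulus\<close>

definition mehler :: "real \<Rightarrow> ('a::euclidean_space \<Rightarrow> real) \<Rightarrow> 'a \<Rightarrow> real" where
  "mehler \<theta> k x = (\<integral>z. k (cos \<theta> *\<^sub>R x + sin \<theta> *\<^sub>R z) \<partial>gauss)"

lemma OU_eq_mehler: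
  assumes "0 \<le> t"
  shows "OU t = mehler (arccos (exp (- t)))"
proof -
  have "- 1 \<le> exp (- t)" "exp (- t) \<le> 1"
    using assms by (auto intro: order_trans[OF _ less_imp_le[OF exp_gt_zero]])
  then have "cos (arccos (exp (- t))) = exp (- t)"
    and "sin (arccos (exp (- t))) = sqrt (1 - (exp (- t))\<^sup>2)"
    by (simp_all add: sin_arccos)
  moreover have "exp (- 2 * t) = (exp (- t))\<^sup>2"
    by (simp add: power2_eq_square exp_add[symmetric])
  ultimately show ?thesis
    unfolding OU_def mehler_def by (simp add: fun_eq_iff)
qed

lemma borel_measurable_mehler [measurable]:
  assumes [measurable]: "k \<in> borel_measurable borel"
  shows "mehler \<theta> k \<in> borel_measurable borel"
proof -
  have "(\<lambda>x. \<integral>z. (\<lambda>(x, z). k (cos \<theta> *\<^sub>R x + sin \<theta> *\<^sub>R z)) (x, z) \<partial>gauss) \<in> borel_measurable borel"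
    by (rule gauss.borel_measurable_lebesgue_integral) measurable
  then show ?thesis
    unfolding mehler_def[abs_def] by simp
qed

lemma abs_mehler_le:
  assumes [measurable]: "k \<in> borel_measurable borel" and "\<And>x. \<bar>k x\<bar> \<le> B"
  shows "\<bar>mehler \<theta> k x\<bar> \<le> B"
  unfolding mehler_def by (rule gauss.abs_integral_le_const) (use assms in auto)

lemma abs_mehler_diff_le:
  assumes [measurable]: "k1 \<in> borel_measurable borel" "k2 \<in> borel_measurable borel"
    and "\<And>x. \<bar>k1 x\<bar> \<le> B" "\<And>x. \<bar>k2 x\<bar> \<le> B"
  shows "\<bar>mehler \<theta> k1 x - mehler \<theta> k2 x\<bar> \<le> mehler \<theta> (\<lambda>y. \<bar>k1 y - k2 y\<bar>) x"
proof -
  have "mehler \<theta> k1 x - mehler \<theta> k2 x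
      = (\<integral>z. k1 (cos \<theta> *\<^sub>R x + sin \<theta> *\<^sub>R z) - k2 (cos \<theta> *\<^sub>R x + sin \<theta> *\<^sub>R z) \<partial>gauss)"
    unfolding mehler_def
    by (rule Bochner_Integration.integral_diff[symmetric]; rule integrable_gauss_bounded[where B=B])
       (use assms in auto)
  then show ?thesis
    unfolding mehler_def by simp
qed

lemma integral_mehler:
  assumes [measurable]: "k \<in> borel_measurable borel" and "\<And>x. \<bar>k x\<bar> \<le> B"
  shows "(\<integral>x. mehler \<theta> k x \<partial>gauss) = (\<integral>x. k x \<partial>gauss)"
proof -
  have "integrable gauss_pair (\<lambda>p. k (cos \<theta> *\<^sub>R fst p + sin \<theta> *\<^sub>R snd p))"
    by (rule integrable_gauss_pair_bounded[where B=B]) (use assms in auto)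
  then have "(\<integral>x. mehler \<theta> k x \<partial>gauss) = (\<integral>p. k (cos \<theta> *\<^sub>R fst p + sin \<theta> *\<^sub>R snd p) \<partial>gauss_pair)"
    unfolding mehler_def by (subst gauss_pair.integral_fst'[symmetric]) simp_all
  also have "\<dots> = (\<integral>x. k x \<partial>gauss)"
    by (rule integral_gauss_pair_combination) simp_all
  finally show ?thesis .
qed

lemma integral_abs_mehler_diff_le:
  assumes k1 [measurable]: "k1 \<in> borel_measurable borel" and k2 [measurable]: "k2 \<in> borel_measurable borel"
    and bounded: "\<And>x. \<bar>k1 x\<bar> \<le> B" "\<And>x. \<bar>k2 x\<bar> \<le> B"
  shows "(\<integral>x. \<bar>mehler \<theta> k1 x - mehler \<theta> k2 x\<bar> \<partial>gauss) \<le> (\<integral>x. \<bar>k1 x - k2 x\<bar> \<partial>gauss)"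
proof -
  have diff_bounded: "\<bar>\<bar>k1 x - k2 x\<bar>\<bar> \<le> 2 * B" for x
    using abs_diff_le_twice[OF bounded] by simp
  have "(\<integral>x. \<bar>mehler \<theta> k1 x - mehler \<theta> k2 x\<bar> \<partial>gauss) \<le> (\<integral>x. mehler \<theta> (\<lambda>y. \<bar>k1 y - k2 y\<bar>) x \<partial>gauss)"
  proof (rule Bochner_Integration.integral_mono)
    show "integrable gauss (\<lambda>x. \<bar>mehler \<theta> k1 x - mehler \<theta> k2 x\<bar>)"
      using abs_diff_le_twice[OF abs_mehler_le[OF k1 bounded(1)] abs_mehler_le[OF k2 bounded(2)]]
      by (intro integrable_gauss_bounded[where B="2 * B"]) auto
    show "integrable gauss (\<lambda>x. mehler \<theta> (\<lambda>y. \<bar>k1 y - k2 y\<bar>) x)"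
      by (rule integrable_gauss_bounded[OF _ abs_mehler_le[OF _ diff_bounded]]) simp_all
  qed (rule abs_mehler_diff_le[OF k1 k2 bounded])
  also have "\<dots> = (\<integral>x. \<bar>k1 x - k2 x\<bar> \<partial>gauss)"
    by (rule integral_mehler[OF _ diff_bounded]) simp
  finally show ?thesis .
qed

definition rot_modulus :: "real \<Rightarrow> ('a::euclidean_space \<Rightarrow> real) \<Rightarrow> real" where
  "rot_modulus \<theta> k = (\<integral>p. \<bar>k (cos \<theta> *\<^sub>R fst p + sin \<theta> *\<^sub>R snd p) - k (fst p)\<bar> \<partial>gauss_pair)"

lemma rot_modulus_0 [simp]: "rot_modulus 0 k = 0"
  by (simp add: rot_modulus_def)

lemma integral_abs_mehler_minus_le_rot_modulus:
  assumes [measurable]: "k \<in> borel_measurable borel" and bounded: "\<And>x. \<bar>k x\<bar> \<le> B"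
  shows "(\<integral>x. \<bar>mehler \<theta> k x - k x\<bar> \<partial>gauss) \<le> rot_modulus \<theta> k"
proof -
  let ?F = "\<lambda>p. \<bar>k (cos \<theta> *\<^sub>R fst p + sin \<theta> *\<^sub>R snd p) - k (fst p)\<bar>"
  have int_F: "integrable gauss_pair ?F"
    by (rule integrable_gauss_pair_abs_diff[OF _ _ _ _ bounded bounded]) simp_all
  have "(\<integral>x. \<bar>mehler \<theta> k x - k x\<bar> \<partial>gauss) \<le> (\<integral>x. (\<integral>z. ?F (x, z) \<partial>gauss) \<partial>gauss)"
  proof (rule integral_mono)
    show "integrable gauss (\<lambda>x. \<bar>mehler \<theta> k x - k x\<bar>)"
      using abs_diff_le_twice[OF abs_mehler_le[OF assms(1) bounded] bounded]
      by (intro integrable_gauss_bounded[where B="2 * B"]) auto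
    show "integrable gauss (\<lambda>x. \<integral>z. ?F (x, z) \<partial>gauss)"
      by (rule gauss_pair.integrable_fst'[OF int_F])
    fix x
    have "mehler \<theta> k x - k x = (\<integral>z. k (cos \<theta> *\<^sub>R x + sin \<theta> *\<^sub>R z) - k x \<partial>gauss)"
      unfolding mehler_def using bounded
      by (subst Bochner_Integration.integral_diff) (auto intro!: integrable_gauss_bounded[where B=B])
    then show "\<bar>mehler \<theta> k x - k x\<bar> \<le> (\<integral>z. ?F (x, z) \<partial>gauss)"
      by simp
  qed
  also have "\<dots> = rot_modulus \<theta> k"
    unfolding rot_modulus_def by (rule gauss_pair.integral_fst'[OF int_F])
  finally show ?thesis .
qed

lemma rotation_angle_add:
  "cos b *\<^sub>R (cos a *\<^sub>R x + sin a *\<^sub>R z) + sin b *\<^sub>R (- sin a *\<^sub>R x + cos a *\<^sub>R z)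
    = cos (a + b) *\<^sub>R x + sin (a + b) *\<^sub>R (z::'a::real_vector)"
  by (simp add: cos_add sin_add algebra_simps)

lemma rot_modulus_add_le:
  assumes [measurable]: "k \<in> borel_measurable borel" and bounded: "\<And>x. \<bar>k x\<bar> \<le> B"
  shows "rot_modulus (a + b) k \<le> rot_modulus a k + rot_modulus b k"
proof -
  let ?R = "\<lambda>\<theta> (p::'a \<times> 'a). cos \<theta> *\<^sub>R fst p + sin \<theta> *\<^sub>R snd p"
  have int: "integrable gauss_pair (\<lambda>p. \<bar>k (f p) - k (g p)\<bar>)"
    if [measurable]: "f \<in> borel_measurable gauss_pair" "g \<in> borel_measurable gauss_pair"
    for f g :: "'a \<times> 'a \<Rightarrow> 'a"
    by (rule integrable_gauss_pair_abs_diff[OF _ _ _ _ bounded bounded]) simp_all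
  define F where "F q = \<bar>k (?R b q) - k (fst q)\<bar>" for q
  have [measurable]: "F \<in> borel_measurable gauss_pair"
    unfolding F_def by measurable
  have F_rotation: "F (rotation (cos a) (sin a) p) = \<bar>k (?R (a + b) p) - k (?R a p)\<bar>" for p
    unfolding F_def by (simp only: rotation_def fst_conv snd_conv rotation_angle_add)
  have "(\<integral>p. \<bar>k (?R (a + b) p) - k (?R a p)\<bar> \<partial>gauss_pair) = (\<integral>p. F (rotation (cos a) (sin a) p) \<partial>gauss_pair)"
    by (simp add: F_rotation)
  also have "\<dots> = (\<integral>p. F p \<partial>gauss_pair)"
    by (rule integral_gauss_pair_rotation) simp_all
  also have "\<dots> = rot_modulus b k"
    by (simp add: F_def rot_modulus_def)
  finally have rotated: "(\<integral>p. \<bar>k (?R (a + b) p) - k (?R a p)\<bar> \<partial>gauss_pair) = rot_modulus b k" .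
  have "rot_modulus (a + b) k
      \<le> (\<integral>p. \<bar>k (?R (a + b) p) - k (?R a p)\<bar> + \<bar>k (?R a p) - k (fst p)\<bar> \<partial>gauss_pair)"
    unfolding rot_modulus_def
    by (rule Bochner_Integration.integral_mono) (auto intro!: int)
  also have "\<dots> = (\<integral>p. \<bar>k (?R (a + b) p) - k (?R a p)\<bar> \<partial>gauss_pair) + rot_modulus a k"
    unfolding rot_modulus_def by (subst Bochner_Integration.integral_add) (auto intro!: int)
  also have "\<dots> = rot_modulus b k + rot_modulus a k"
    by (simp only: rotated)
  finally show ?thesis
    by simp
qed

lemma rot_modulus_mult_le:
  assumes "k \<in> borel_measurable borel" and "\<And>x. \<bar>k x\<bar> \<le> B"
  shows "rot_modulus (real n * \<theta>) k \<le> real n * rot_modulus \<theta> k"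
proof (induction n)
  case (Suc n)
  have "rot_modulus (real (Suc n) * \<theta>) k = rot_modulus (real n * \<theta> + \<theta>) k"
    by (simp add: algebra_simps)
  also have "\<dots> \<le> rot_modulus (real n * \<theta>) k + rot_modulus \<theta> k"
    by (rule rot_modulus_add_le[OF assms])
  also have "\<dots> \<le> real (Suc n) * rot_modulus \<theta> k"
    using Suc.IH by (simp add: distrib_right)
  finally show ?case .
qed simp

lemma rot_modulus_le_rot_modulus_add:
  assumes [measurable]: "k1 \<in> borel_measurable borel" "k2 \<in> borel_measurable borel"
    and bounded: "\<And>x. \<bar>k1 x\<bar> \<le> B" "\<And>x. \<bar>k2 x\<bar> \<le> B"
  shows "rot_modulus \<theta> k1 \<le> rot_modulus \<theta> k2 + 2 * (\<integral>x. \<bar>k1 x - k2 x\<bar> \<partial>gauss)"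
proof -
  let ?R = "\<lambda>p::'a \<times> 'a. cos \<theta> *\<^sub>R fst p + sin \<theta> *\<^sub>R snd p"
  have int11: "integrable gauss_pair (\<lambda>p. \<bar>k1 (?R p) - k1 (fst p)\<bar>)"
    by (rule integrable_gauss_pair_abs_diff[OF _ _ _ _ bounded(1) bounded(1)]) simp_all
  have int22: "integrable gauss_pair (\<lambda>p. \<bar>k2 (?R p) - k2 (fst p)\<bar>)"
    by (rule integrable_gauss_pair_abs_diff[OF _ _ _ _ bounded(2) bounded(2)]) simp_all
  have int12: "integrable gauss_pair (\<lambda>p. \<bar>k1 (f p) - k2 (f p)\<bar>)"
    if [measurable]: "f \<in> borel_measurable gauss_pair" for f :: "'a \<times> 'a \<Rightarrow> 'a"
    by (rule integrable_gauss_pair_abs_diff[OF _ _ _ _ bounded]) simp_all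
  have "rot_modulus \<theta> k1 \<le> (\<integral>p. \<bar>k2 (?R p) - k2 (fst p)\<bar> + \<bar>k1 (?R p) - k2 (?R p)\<bar>
      + \<bar>k1 (1 *\<^sub>R fst p + 0 *\<^sub>R snd p) - k2 (1 *\<^sub>R fst p + 0 *\<^sub>R snd p)\<bar> \<partial>gauss_pair)"
    unfolding rot_modulus_def
  proof (rule Bochner_Integration.integral_mono)
    show "integrable gauss_pair (\<lambda>p. \<bar>k2 (?R p) - k2 (fst p)\<bar> + \<bar>k1 (?R p) - k2 (?R p)\<bar>
        + \<bar>k1 (1 *\<^sub>R fst p + 0 *\<^sub>R snd p) - k2 (1 *\<^sub>R fst p + 0 *\<^sub>R snd p)\<bar>)"
      by (intro Bochner_Integration.integrable_add int22 int12) simp_all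
  qed (use int11 in auto)
  also have "\<dots> = rot_modulus \<theta> k2 + (\<integral>p. \<bar>k1 (?R p) - k2 (?R p)\<bar> \<partial>gauss_pair)
      + (\<integral>p. \<bar>k1 (1 *\<^sub>R fst p + 0 *\<^sub>R snd p) - k2 (1 *\<^sub>R fst p + 0 *\<^sub>R snd p)\<bar> \<partial>gauss_pair)"
    unfolding rot_modulus_def
    by (subst Bochner_Integration.integral_add; (intro Bochner_Integration.integrable_add int22 int12)?; simp)+
  also have "\<dots> = rot_modulus \<theta> k2 + 2 * (\<integral>x. \<bar>k1 x - k2 x\<bar> \<partial>gauss)"
    by (subst (1 2) integral_gauss_pair_combination[where F="\<lambda>x. \<bar>k1 x - k2 x\<bar>"]) simp_all
  finally show ?thesis .
qed

lemma one_minus_cos_le_sq: "1 - cos t \<le> t\<^sup>2 / 2" for t :: real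
proof -
  have "\<bar>sin (t / 2)\<bar>\<^sup>2 \<le> \<bar>t / 2\<bar>\<^sup>2"
    by (intro power_mono abs_sin_x_le_abs_x) simp
  then show ?thesis
    using cos_double_sin[of "t / 2"] by (simp add: power_divide)
qed

lemma one_minus_cos_le_abs: "1 - cos t \<le> \<bar>t\<bar>" for t :: real
proof -
  have "\<bar>sin (t / 2)\<bar> * \<bar>sin (t / 2)\<bar> \<le> 1 * \<bar>t / 2\<bar>"
    by (intro mult_mono abs_sin_x_le_abs_x) auto
  then show ?thesis
    using cos_double_sin[of "t / 2"] by (simp add: power2_eq_square)
qed

lemma abs_rotation_diff_le:
  assumes "L-lipschitz_on UNIV k"
  shows "\<bar>k (cos \<theta> *\<^sub>R x + sin \<theta> *\<^sub>R z) - k x\<bar> \<le> L * (\<bar>1 - cos \<theta>\<bar> * norm x + \<bar>sin \<theta>\<bar> * norm z)"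
proof -
  have "\<bar>k (cos \<theta> *\<^sub>R x + sin \<theta> *\<^sub>R z) - k x\<bar> \<le> L * norm ((cos \<theta> *\<^sub>R x + sin \<theta> *\<^sub>R z) - x)"
    using lipschitz_on_normD[OF assms] by simp
  also have "(cos \<theta> *\<^sub>R x + sin \<theta> *\<^sub>R z) - x = sin \<theta> *\<^sub>R z - (1 - cos \<theta>) *\<^sub>R x"
    by (simp add: algebra_simps)
  also have "L * norm \<dots> \<le> L * (\<bar>1 - cos \<theta>\<bar> * norm x + \<bar>sin \<theta>\<bar> * norm z)"
    using norm_triangle_ineq4[of "sin \<theta> *\<^sub>R z" "(1 - cos \<theta>) *\<^sub>R x"] lipschitz_on_nonneg[OF assms]
    by (intro mult_left_mono) simp_all
  finally show ?thesis .
qed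

lemma rot_modulus_lipschitz_le:
  fixes k :: "'a::euclidean_space \<Rightarrow> real"
  assumes lip: "L-lipschitz_on UNIV k" and bounded: "\<And>x. \<bar>k x\<bar> \<le> B"
  shows "rot_modulus \<theta> k \<le> L * (\<bar>1 - cos \<theta>\<bar> + \<bar>sin \<theta>\<bar>) * (\<integral>x. norm x \<partial>(gauss :: 'a measure))"
proof -
  have [measurable]: "k \<in> borel_measurable borel"
    by (rule borel_measurable_continuous_onI[OF lipschitz_on_continuous_on[OF lip]])
  have "rot_modulus \<theta> k \<le> (\<integral>p. L * (\<bar>1 - cos \<theta>\<bar> * norm (fst p) + \<bar>sin \<theta>\<bar> * norm (snd p))
      \<partial>(gauss_pair :: ('a \<times> 'a) measure))"
    unfolding rot_modulus_def
  proof (rule Bochner_Integration.integral_mono)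
    show "integrable gauss_pair (\<lambda>p. \<bar>k (cos \<theta> *\<^sub>R fst p + sin \<theta> *\<^sub>R snd p) - k (fst p)\<bar>)"
      by (rule integrable_gauss_pair_abs_diff[OF _ _ _ _ bounded bounded]) simp_all
    show "integrable gauss_pair (\<lambda>p::'a \<times> 'a. L * (\<bar>1 - cos \<theta>\<bar> * norm (fst p) + \<bar>sin \<theta>\<bar> * norm (snd p)))"
      by (intro integrable_mult_right Bochner_Integration.integrable_add integrable_gauss_pair_norm)
  qed (rule abs_rotation_diff_le[OF lip])
  also have "\<dots> = L * (\<bar>1 - cos \<theta>\<bar> * (\<integral>p. norm (fst p) \<partial>(gauss_pair :: ('a \<times> 'a) measure))
      + \<bar>sin \<theta>\<bar> * (\<integral>p. norm (snd p) \<partial>(gauss_pair :: ('a \<times> 'a) measure)))"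
    using integrable_gauss_pair_norm[where 'a='a] by simp
  also have "\<dots> = L * (\<bar>1 - cos \<theta>\<bar> + \<bar>sin \<theta>\<bar>) * (\<integral>x. norm x \<partial>(gauss :: 'a measure))"
    using integral_gauss_pair_combination[of 1 0 "norm :: 'a \<Rightarrow> real"]
      integral_gauss_pair_combination[of 0 1 "norm :: 'a \<Rightarrow> real"]
    by (simp add: algebra_simps)
  finally show ?thesis .
qed

lemma rotation_quotient_tendsto:
  fixes k :: "'a::real_normed_vector \<Rightarrow> real"
  assumes lip: "L-lipschitz_on UNIV k"
    and deriv: "((\<lambda>h. k (x + h *\<^sub>R z)) has_real_derivative D) (at 0)"
  shows "((\<lambda>\<theta>. (k (cos \<theta> *\<^sub>R x + sin \<theta> *\<^sub>R z) - k x) / \<theta>) \<longlongrightarrow> D) (at 0)"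
proof -
  have "((\<lambda>h. k (x + h *\<^sub>R z)) has_real_derivative D) (at (sin 0))"
    using deriv by simp
  from DERIV_chain2[OF this DERIV_sin]
  have "((\<lambda>\<theta>. k (x + sin \<theta> *\<^sub>R z)) has_real_derivative D) (at 0)"
    by simp
  then have main: "((\<lambda>\<theta>. (k (x + sin \<theta> *\<^sub>R z) - k x) / \<theta>) \<longlongrightarrow> D) (at 0)"
    by (simp add: DERIV_def)
  have "((\<lambda>\<theta>. (k (cos \<theta> *\<^sub>R x + sin \<theta> *\<^sub>R z) - k (x + sin \<theta> *\<^sub>R z)) / \<theta>) \<longlongrightarrow> 0) (at 0)"
  proof (rule Lim_null_comparison)
    show "\<forall>\<^sub>F \<theta> in at 0. norm ((k (cos \<theta> *\<^sub>R x + sin \<theta> *\<^sub>R z) - k (x + sin \<theta> *\<^sub>R z)) / \<theta>)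
        \<le> L * norm x / 2 * \<bar>\<theta>\<bar>"
    proof (intro always_eventually allI)
      fix \<theta> :: real
      have "\<bar>k (cos \<theta> *\<^sub>R x + sin \<theta> *\<^sub>R z) - k (x + sin \<theta> *\<^sub>R z)\<bar>
          \<le> L * norm ((cos \<theta> *\<^sub>R x + sin \<theta> *\<^sub>R z) - (x + sin \<theta> *\<^sub>R z))"
        using lipschitz_on_normD[OF lip, of "cos \<theta> *\<^sub>R x + sin \<theta> *\<^sub>R z" "x + sin \<theta> *\<^sub>R z"] by simp
      also have "(cos \<theta> *\<^sub>R x + sin \<theta> *\<^sub>R z) - (x + sin \<theta> *\<^sub>R z) = (cos \<theta> - 1) *\<^sub>R x"
        by (simp add: algebra_simps)
      also have "norm ((cos \<theta> - 1) *\<^sub>R x) = (1 - cos \<theta>) * norm x"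
        using cos_le_one[of \<theta>] by simp
      also have "L * ((1 - cos \<theta>) * norm x) \<le> L * (\<theta>\<^sup>2 / 2 * norm x)"
        using lipschitz_on_nonneg[OF lip] one_minus_cos_le_sq[of \<theta>]
        by (intro mult_left_mono mult_right_mono) simp_all
      finally have "\<bar>k (cos \<theta> *\<^sub>R x + sin \<theta> *\<^sub>R z) - k (x + sin \<theta> *\<^sub>R z)\<bar> \<le> \<bar>\<theta>\<bar> * (L * norm x / 2 * \<bar>\<theta>\<bar>)"
        by (simp add: power2_eq_square mult_ac)
      then show "norm ((k (cos \<theta> *\<^sub>R x + sin \<theta> *\<^sub>R z) - k (x + sin \<theta> *\<^sub>R z)) / \<theta>) \<le> L * norm x / 2 * \<bar>\<theta>\<bar>"
        using lipschitz_on_nonneg[OF lip]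
        by (cases "\<theta> = 0") (simp_all add: divide_le_eq mult.commute)
    qed
    show "((\<lambda>\<theta>. L * norm x / 2 * \<bar>\<theta>\<bar>) \<longlongrightarrow> 0) (at 0)"
      by (auto intro!: tendsto_eq_intros)
  qed
  with main have "((\<lambda>\<theta>. (k (x + sin \<theta> *\<^sub>R z) - k x) / \<theta>
      + (k (cos \<theta> *\<^sub>R x + sin \<theta> *\<^sub>R z) - k (x + sin \<theta> *\<^sub>R z)) / \<theta>) \<longlongrightarrow> D + 0) (at 0)"
    by (rule tendsto_add)
  then show ?thesis
    by (simp add: diff_divide_distrib)
qed

lemma tendsto_rot_modulus_quotient:
  fixes k :: "'a::euclidean_space \<Rightarrow> real" and k' :: "'a \<Rightarrow> 'a \<Rightarrow> real"
  assumes lip: "L-lipschitz_on UNIV k" and bounded: "\<And>x. \<bar>k x\<bar> \<le> B"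
    and deriv: "\<And>x z. ((\<lambda>h. k (x + h *\<^sub>R z)) has_real_derivative k' x z) (at 0)"
    and \<theta>: "\<theta> \<longlonglongrightarrow> 0" "\<And>n. 0 < \<theta> n"
  shows "(\<lambda>n. rot_modulus (\<theta> n) k / \<theta> n) \<longlonglongrightarrow> (\<integral>p. \<bar>k' (fst p) (snd p)\<bar> \<partial>gauss_pair)"
proof -
  have [measurable]: "k \<in> borel_measurable borel"
    by (rule borel_measurable_continuous_onI[OF lipschitz_on_continuous_on[OF lip]])
  define F where "F n p = \<bar>(k (cos (\<theta> n) *\<^sub>R fst p + sin (\<theta> n) *\<^sub>R snd p) - k (fst p)) / \<theta> n\<bar>"
    for n and p :: "'a \<times> 'a"
  define w where "w p = L * (norm (fst p) + norm (snd p))" for p :: "'a \<times> 'a"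
  have \<theta>_at: "filterlim \<theta> (at 0) sequentially"
    using \<theta> by (auto simp: filterlim_at less_imp_neq[symmetric])
  have [measurable]: "F n \<in> borel_measurable gauss_pair" for n
    unfolding F_def by measurable
  have F_lim: "(\<lambda>n. F n p) \<longlonglongrightarrow> \<bar>k' (fst p) (snd p)\<bar>" for p
    unfolding F_def by (intro tendsto_rabs filterlim_compose[OF rotation_quotient_tendsto[OF lip deriv] \<theta>_at])
  have F_le: "norm (F n p) \<le> w p" for n p
  proof -
    have "\<bar>k (cos (\<theta> n) *\<^sub>R fst p + sin (\<theta> n) *\<^sub>R snd p) - k (fst p)\<bar>
        \<le> L * (\<bar>1 - cos (\<theta> n)\<bar> * norm (fst p) + \<bar>sin (\<theta> n)\<bar> * norm (snd p))"
      by (rule abs_rotation_diff_le[OF lip])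
    also have "\<dots> \<le> L * (\<theta> n * norm (fst p) + \<theta> n * norm (snd p))"
      using \<theta>(2)[of n] one_minus_cos_le_abs[of "\<theta> n"] abs_sin_x_le_abs_x[of "\<theta> n"] lipschitz_on_nonneg[OF lip]
      by (intro mult_left_mono add_mono mult_right_mono) simp_all
    finally show ?thesis
      unfolding F_def w_def using \<theta>(2)[of n] by (simp add: divide_le_eq algebra_simps)
  qed
  have int_w: "integrable gauss_pair w"
    unfolding w_def by (intro integrable_mult_right Bochner_Integration.integrable_add integrable_gauss_pair_norm)
  have [measurable]: "(\<lambda>p. \<bar>k' (fst p) (snd p)\<bar>) \<in> borel_measurable gauss_pair"
    by (rule borel_measurable_LIMSEQ_real[where u=F]) (use F_lim in auto)
  have "(\<lambda>n. \<integral>p. F n p \<partial>gauss_pair) \<longlonglongrightarrow> (\<integral>p. \<bar>k' (fst p) (snd p)\<bar> \<partial>gauss_pair)"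
    by (rule integral_dominated_convergence[where w=w]) (use F_lim F_le int_w in auto)
  moreover have "rot_modulus (\<theta> n) k / \<theta> n = (\<integral>p. F n p \<partial>gauss_pair)" for n
    unfolding rot_modulus_def F_def using \<theta>(2)[of n] by simp
  ultimately show ?thesis
    by simp
qed

text \<open>Subadditivity bounds the modulus along \<open>\<phi>\<close> by \<open>\<phi>\<close> times the difference quotient of the
  modulus along \<open>\<phi> / n\<close>, which tends to the mean absolute directional derivative.\<close>

lemma rot_modulus_le_integral_directional_derivative:
  fixes k :: "'a::euclidean_space \<Rightarrow> real" and k' :: "'a \<Rightarrow> 'a \<Rightarrow> real"
  assumes lip: "L-lipschitz_on UNIV k" and bounded: "\<And>x. \<bar>k x\<bar> \<le> B"
    and deriv: "\<And>x z. ((\<lambda>h. k (x + h *\<^sub>R z)) has_real_derivative k' x z) (at 0)"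
    and "0 \<le> \<phi>"
  shows "rot_modulus \<phi> k \<le> \<phi> * (\<integral>p. \<bar>k' (fst p) (snd p)\<bar> \<partial>gauss_pair)"
proof (cases "\<phi> = 0")
  case False
  then have "0 < \<phi>"
    using assms(4) by simp
  define \<theta> where "\<theta> n = \<phi> * inverse (real (Suc n))" for n
  have \<theta>_pos: "0 < \<theta> n" for n
    unfolding \<theta>_def using \<open>0 < \<phi>\<close> by simp
  have "\<theta> \<longlonglongrightarrow> \<phi> * 0"
    unfolding \<theta>_def by (intro tendsto_mult tendsto_const LIMSEQ_inverse_real_of_nat)
  then have lim: "(\<lambda>n. \<phi> * (rot_modulus (\<theta> n) k / \<theta> n)) \<longlonglongrightarrow> \<phi> * (\<integral>p. \<bar>k' (fst p) (snd p)\<bar> \<partial>gauss_pair)"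
    using \<theta>_pos by (intro tendsto_mult_left tendsto_rot_modulus_quotient[OF lip bounded deriv]) simp_all
  have "rot_modulus \<phi> k \<le> \<phi> * (rot_modulus (\<theta> n) k / \<theta> n)" for n
  proof -
    have "real (Suc n) * \<theta> n = \<phi>"
      unfolding \<theta>_def by (simp add: field_simps)
    then have "rot_modulus \<phi> k = rot_modulus (real (Suc n) * \<theta> n) k"
      by simp
    also have "\<dots> \<le> real (Suc n) * rot_modulus (\<theta> n) k"
      by (rule rot_modulus_mult_le[OF _ bounded]) (rule borel_measurable_continuous_onI[OF lipschitz_on_continuous_on[OF lip]])
    also have "\<dots> = (real (Suc n) * \<theta> n) * (rot_modulus (\<theta> n) k / \<theta> n)"
      using \<theta>_pos[of n] by simp
    also have "\<dots> = \<phi> * (rot_modulus (\<theta> n) k / \<theta> n)"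
      by (simp only: \<open>real (Suc n) * \<theta> n = \<phi>\<close>)
    finally show ?thesis .
  qed
  with lim show ?thesis
    by (intro LIMSEQ_le_const) auto
qed simp

section \<open>Smoothed Lipschitz cutoffs\<close>

lemma borel_measurable_infdist [measurable]: "(\<lambda>x. infdist x A) \<in> borel_measurable borel"
  by (intro borel_measurable_continuous_onI continuous_intros)

lemma sets_nbhd [measurable]: "nbhd A \<delta> \<in> sets (borel :: 'a::euclidean_space measure)"
proof -
  have "nbhd A \<delta> = {x \<in> space borel. A \<noteq> {} \<and> infdist x A \<le> \<delta>}"
    unfolding nbhd_def by simp
  also have "\<dots> \<in> sets borel"
    by measurable
  finally show ?thesis .
qed

lemma borel_measurable_indicator_nbhd_diff [measurable]:
  fixes A :: "'a::euclidean_space set"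
  assumes [measurable]: "A \<in> sets borel"
  shows "(indicator (nbhd A \<delta> - A) :: 'a \<Rightarrow> real) \<in> borel_measurable borel"
  by (rule borel_measurable_indicator) measurable

lemma abs_indicator_le_1: "\<bar>indicator S x :: real\<bar> \<le> 1"
  by (simp add: indicator_def)

definition cutoff :: "'a::euclidean_space set \<Rightarrow> real \<Rightarrow> 'a \<Rightarrow> real" where
  "cutoff A \<delta> x = max 0 (1 - infdist x A / \<delta>)"

lemma borel_measurable_cutoff [measurable]: "cutoff A \<delta> \<in> borel_measurable borel"
  unfolding cutoff_def[abs_def] by measurable

lemma abs_cutoff_le: "0 < \<delta> \<Longrightarrow> \<bar>cutoff A \<delta> x\<bar> \<le> 1"
  using infdist_nonneg[of x A] unfolding cutoff_def by auto

lemma lipschitz_cutoff: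
  assumes "0 < \<delta>"
  shows "(1 / \<delta>)-lipschitz_on UNIV (cutoff A \<delta>)"
proof (rule lipschitz_onI)
  fix a b :: 'a
  have "\<bar>max 0 (1 - infdist a A / \<delta>) - max 0 (1 - infdist b A / \<delta>)\<bar> \<le> \<bar>infdist a A - infdist b A\<bar> / \<delta>"
    using assms by (simp add: max_def abs_if divide_simps)
  also have "\<dots> \<le> dist a b / \<delta>"
    using infdist_triangle_abs[of a A b] assms by (simp add: divide_right_mono)
  finally show "dist (cutoff A \<delta> a) (cutoff A \<delta> b) \<le> 1 / \<delta> * dist a b"
    by (simp add: cutoff_def dist_real_def)
qed (use assms in simp)

lemma abs_indicator_minus_cutoff_le:
  assumes "0 < \<delta>" and "A \<noteq> {}"
  shows "\<bar>indicator A x - cutoff A \<delta> x\<bar> \<le> indicator (nbhd A \<delta> - A) x"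
proof (cases "x \<in> A")
  case False
  then show ?thesis
    using assms abs_cutoff_le[OF assms(1), of A x]
    by (cases "infdist x A \<le> \<delta>") (auto simp: nbhd_def cutoff_def field_simps)
qed (simp add: cutoff_def)

lemma cutoff_increment_le:
  assumes "0 < \<delta>" and "A \<noteq> {}"
  shows "cutoff A \<delta> (a + w) - cutoff A \<delta> a \<le> norm w / \<delta> * indicator (nbhd A (\<delta> + norm w) - A) a"
proof (cases "a \<notin> A \<and> infdist a A \<le> \<delta> + norm w")
  case True
  have "\<bar>cutoff A \<delta> (a + w) - cutoff A \<delta> a\<bar> \<le> 1 / \<delta> * dist (a + w) a"
    using lipschitz_onD[OF lipschitz_cutoff[OF assms(1)], of "a + w" a] by (simp add: dist_real_def)
  then have "cutoff A \<delta> (a + w) - cutoff A \<delta> a \<le> 1 / \<delta> * dist (a + w) a"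
    by (simp add: abs_le_iff)
  then show ?thesis
    using True assms(2) by (simp add: dist_norm nbhd_def)
next
  case False
  show ?thesis
  proof (cases "a \<in> A")
    case True
    then show ?thesis
      using abs_cutoff_le[OF assms(1), of A "a + w"] by (simp add: cutoff_def)
  next
    case False
    with \<open>\<not> (a \<notin> A \<and> infdist a A \<le> \<delta> + norm w)\<close> have far: "\<delta> + norm w < infdist a A"
      by simp
    have "infdist a A \<le> infdist (a + w) A + dist a (a + w)"
      by (rule infdist_triangle)
    then have "\<delta> < infdist (a + w) A"
      using far by (simp add: dist_norm)
    moreover have "\<delta> < infdist a A"
      using far norm_ge_zero[of w] by linarith
    ultimately show ?thesis
      using assms(1) by (simp add: cutoff_def nbhd_def)
  qed
qed

lemma integral_abs_indicator_minus_cutoff_le: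
  fixes A :: "'a::euclidean_space set"
  assumes [measurable]: "A \<in> sets borel" and "0 < \<delta>" and "A \<noteq> {}"
  shows "(\<integral>x. \<bar>indicator A x - cutoff A \<delta> x\<bar> \<partial>gauss) \<le> measure gauss (nbhd A \<delta> - A)"
proof -
  have "(\<integral>x. \<bar>indicator A x - cutoff A \<delta> x\<bar> \<partial>gauss) \<le> (\<integral>x. indicator (nbhd A \<delta> - A) x \<partial>(gauss :: 'a measure))"
  proof (rule Bochner_Integration.integral_mono)
    have "\<bar>indicator A x - cutoff A \<delta> x\<bar> \<le> 1" for x
      by (rule order_trans[OF abs_indicator_minus_cutoff_le[OF assms(2,3)]]) (simp add: indicator_def)
    then have "\<bar>\<bar>indicator A x - cutoff A \<delta> x\<bar>\<bar> \<le> 1" for x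
      by simp
    then show "integrable gauss (\<lambda>x. \<bar>indicator A x - cutoff A \<delta> x\<bar>)"
      by (rule integrable_gauss_bounded[rotated]) measurable
    show "integrable gauss (\<lambda>x. indicator (nbhd A \<delta> - A) x :: real)"
      by (rule integrable_gauss_bounded[where B=1]) (auto simp: indicator_def)
  qed (rule abs_indicator_minus_cutoff_le[OF assms(2,3)])
  then show ?thesis
    by simp
qed

lemma lipschitz_mehler:
  assumes lip: "L-lipschitz_on UNIV k" and bounded: "\<And>x. \<bar>k x\<bar> \<le> B"
  shows "L-lipschitz_on UNIV (mehler \<theta> k)"
proof (rule lipschitz_onI)
  have [measurable]: "k \<in> borel_measurable borel"
    by (rule borel_measurable_continuous_onI[OF lipschitz_on_continuous_on[OF lip]])
  fix a b :: 'a
  have "mehler \<theta> k a - mehler \<theta> k b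
      = (\<integral>z. k (cos \<theta> *\<^sub>R a + sin \<theta> *\<^sub>R z) - k (cos \<theta> *\<^sub>R b + sin \<theta> *\<^sub>R z) \<partial>gauss)"
    unfolding mehler_def
    by (rule Bochner_Integration.integral_diff[symmetric]; rule integrable_gauss_bounded[where B=B])
       (use bounded in auto)
  also have "\<bar>\<dots>\<bar> \<le> L * dist a b"
  proof (rule gauss.abs_integral_le_const)
    fix z :: 'a
    have "\<bar>k (cos \<theta> *\<^sub>R a + sin \<theta> *\<^sub>R z) - k (cos \<theta> *\<^sub>R b + sin \<theta> *\<^sub>R z)\<bar>
        \<le> L * dist (cos \<theta> *\<^sub>R a + sin \<theta> *\<^sub>R z) (cos \<theta> *\<^sub>R b + sin \<theta> *\<^sub>R z)"
      using lipschitz_onD[OF lip, of "cos \<theta> *\<^sub>R a + sin \<theta> *\<^sub>R z" "cos \<theta> *\<^sub>R b + sin \<theta> *\<^sub>R z"]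
      by (simp add: dist_real_def)
    also have "dist (cos \<theta> *\<^sub>R a + sin \<theta> *\<^sub>R z) (cos \<theta> *\<^sub>R b + sin \<theta> *\<^sub>R z) = \<bar>cos \<theta>\<bar> * dist a b"
      by (simp add: dist_norm flip: scaleR_diff_right)
    also have "L * (\<bar>cos \<theta>\<bar> * dist a b) \<le> L * dist a b"
      using lipschitz_on_nonneg[OF lip] by (intro mult_left_mono) (simp_all add: mult_left_le_one_le)
    finally show "\<bar>k (cos \<theta> *\<^sub>R a + sin \<theta> *\<^sub>R z) - k (cos \<theta> *\<^sub>R b + sin \<theta> *\<^sub>R z)\<bar> \<le> L * dist a b" .
  qed measurable
  finally show "dist (mehler \<theta> k a) (mehler \<theta> k b) \<le> L * dist a b"
    by (simp add: dist_real_def)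
qed (rule lipschitz_on_nonneg[OF lip])

definition mehler_grad :: "real \<Rightarrow> ('a::euclidean_space \<Rightarrow> real) \<Rightarrow> 'a \<Rightarrow> 'a" where
  "mehler_grad \<theta> k x = (cos \<theta> / sin \<theta>) *\<^sub>R (\<integral>y. k (cos \<theta> *\<^sub>R x + sin \<theta> *\<^sub>R y) *\<^sub>R y \<partial>gauss)"

lemma borel_measurable_mehler_grad [measurable]:
  assumes [measurable]: "k \<in> borel_measurable borel"
  shows "mehler_grad \<theta> k \<in> borel_measurable borel"
proof -
  have "(\<lambda>x. \<integral>y. (\<lambda>(x, y). k (cos \<theta> *\<^sub>R x + sin \<theta> *\<^sub>R y) *\<^sub>R y) (x, y) \<partial>gauss) \<in> borel_measurable borel"
    by (rule gauss.borel_measurable_lebesgue_integral) measurable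
  then show ?thesis
    unfolding mehler_grad_def[abs_def] by simp
qed

lemma has_real_derivative_mehler:
  assumes [measurable]: "k \<in> borel_measurable borel" and bounded: "\<And>x. \<bar>k x\<bar> \<le> B"
    and "sin \<theta> \<noteq> 0"
  shows "((\<lambda>h. mehler \<theta> k (x + h *\<^sub>R z)) has_real_derivative z \<bullet> mehler_grad \<theta> k x) (at 0)"
proof -
  define H where "H y = k (cos \<theta> *\<^sub>R x + sin \<theta> *\<^sub>R y)" for y
  define v where "v = (cos \<theta> / sin \<theta>) *\<^sub>R z"
  have [measurable]: "H \<in> borel_measurable borel"
    unfolding H_def by measurable
  have translate: "mehler \<theta> k (x + h *\<^sub>R z) = (\<integral>y. H (y + h *\<^sub>R v) \<partial>gauss)" for h
  proof -
    have "cos \<theta> *\<^sub>R (x + h *\<^sub>R z) + sin \<theta> *\<^sub>R y = cos \<theta> *\<^sub>R x + sin \<theta> *\<^sub>R (y + h *\<^sub>R v)" for y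
      unfolding v_def using assms(3) by (simp add: algebra_simps)
    then show ?thesis
      unfolding mehler_def H_def by simp
  qed
  have "((\<lambda>h. \<integral>y. H (y + h *\<^sub>R v) \<partial>gauss) has_real_derivative (\<integral>y. H y * (y \<bullet> v) \<partial>gauss)) (at 0)"
    by (rule has_real_derivative_integral_gauss_translate[where C=B and K=0]) (simp_all add: H_def bounded)
  moreover have "(\<integral>y. H y * (y \<bullet> v) \<partial>gauss) = z \<bullet> mehler_grad \<theta> k x"
  proof -
    have "norm (H y *\<^sub>R y) \<le> norm (B * norm y)" for y
    proof -
      have "norm (H y *\<^sub>R y) \<le> B * norm y"
        using bounded by (simp add: H_def mult_right_mono)
      then show ?thesis
        by simp
    qed
    then have "integrable gauss (\<lambda>y. H y *\<^sub>R y)"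
      by (intro Bochner_Integration.integrable_bound[OF integrable_mult_right[OF integrable_gauss_norm]] AE_I2)
         measurable
    then have "(\<integral>y. (H y *\<^sub>R y) \<bullet> v \<partial>gauss) = (\<integral>y. H y *\<^sub>R y \<partial>gauss) \<bullet> v"
      by (rule integral_inner_left)
    then show ?thesis
      unfolding mehler_grad_def H_def v_def by (simp add: inner_commute)
  qed
  ultimately show ?thesis
    by (simp add: translate)
qed

lemma mehler_cutoff_increment_le:
  fixes A :: "'a::euclidean_space set"
  assumes [measurable]: "A \<in> sets borel" and "0 < \<delta>" and "A \<noteq> {}"
  shows "mehler \<theta> (cutoff A \<delta>) (x + w) - mehler \<theta> (cutoff A \<delta>) x
    \<le> \<bar>cos \<theta>\<bar> * norm w / \<delta> * mehler \<theta> (indicator (nbhd A (\<delta> + \<bar>cos \<theta>\<bar> * norm w) - A)) x"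
proof -
  let ?p = "\<lambda>y. cos \<theta> *\<^sub>R x + sin \<theta> *\<^sub>R y"
  have "mehler \<theta> (cutoff A \<delta>) (x + w) - mehler \<theta> (cutoff A \<delta>) x
      = (\<integral>y. cutoff A \<delta> (?p y + cos \<theta> *\<^sub>R w) - cutoff A \<delta> (?p y) \<partial>gauss)"
    unfolding mehler_def
    by (subst Bochner_Integration.integral_diff;
        (rule integrable_gauss_bounded[where B=1], simp, rule abs_cutoff_le[OF assms(2)])?)
       (simp add: algebra_simps)
  also have "\<dots> \<le> (\<integral>y. \<bar>cos \<theta>\<bar> * norm w / \<delta> * indicator (nbhd A (\<delta> + \<bar>cos \<theta>\<bar> * norm w) - A) (?p y) \<partial>gauss)"
  proof (rule Bochner_Integration.integral_mono)
    show "integrable gauss (\<lambda>y. cutoff A \<delta> (?p y + cos \<theta> *\<^sub>R w) - cutoff A \<delta> (?p y))"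
      by (rule integrable_gauss_bounded[where B="2 * 1"]) (measurable, intro abs_diff_le_twice abs_cutoff_le assms(2))
    have "(\<lambda>y. indicator (nbhd A (\<delta> + \<bar>cos \<theta>\<bar> * norm w) - A) (?p y) :: real) \<in> borel_measurable borel"
      by (rule measurable_compose[OF _ borel_measurable_indicator_nbhd_diff[OF assms(1)]]) measurable
    then have "integrable gauss (\<lambda>y. indicator (nbhd A (\<delta> + \<bar>cos \<theta>\<bar> * norm w) - A) (?p y) :: real)"
      by (rule integrable_gauss_bounded[where B=1]) (simp add: indicator_def)
    then show "integrable gauss (\<lambda>y. \<bar>cos \<theta>\<bar> * norm w / \<delta> * indicator (nbhd A (\<delta> + \<bar>cos \<theta>\<bar> * norm w) - A) (?p y) :: real)"
      by (rule integrable_mult_right)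
    show "cutoff A \<delta> (?p y + cos \<theta> *\<^sub>R w) - cutoff A \<delta> (?p y)
        \<le> \<bar>cos \<theta>\<bar> * norm w / \<delta> * indicator (nbhd A (\<delta> + \<bar>cos \<theta>\<bar> * norm w) - A) (?p y)" for y
      using cutoff_increment_le[OF assms(2,3), of "?p y" "cos \<theta> *\<^sub>R w"] by simp
  qed
  also have "\<dots> = \<bar>cos \<theta>\<bar> * norm w / \<delta> * mehler \<theta> (indicator (nbhd A (\<delta> + \<bar>cos \<theta>\<bar> * norm w) - A)) x"
    unfolding mehler_def by simp
  finally show ?thesis .
qed

lemma tendsto_indicator_nbhd:
  assumes "e \<longlonglongrightarrow> 0" and "\<And>n. 0 \<le> e n"
  shows "(\<lambda>n. indicator (nbhd A (\<delta> + e n) - A) x :: real) \<longlonglongrightarrow> indicator (nbhd A \<delta> - A) x"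
proof (cases "x \<notin> A \<and> A \<noteq> {} \<and> \<delta> < infdist x A")
  case True
  then have "0 < infdist x A - \<delta>"
    by simp
  from order_tendstoD(2)[OF assms(1) this]
  have "\<forall>\<^sub>F n in sequentially. indicator (nbhd A (\<delta> + e n) - A) x = (0::real)"
    by eventually_elim (simp add: nbhd_def)
  then have "(\<lambda>n. indicator (nbhd A (\<delta> + e n) - A) x :: real) \<longlonglongrightarrow> 0"
    by (rule tendsto_eventually)
  moreover have "indicator (nbhd A \<delta> - A) x = (0::real)"
    using True by (simp add: nbhd_def)
  ultimately show ?thesis
    by simp
next
  case False
  then have "indicator (nbhd A (\<delta> + e n) - A) x = (indicator (nbhd A \<delta> - A) x :: real)" for n
    using assms(2)[of n] by (auto simp: nbhd_def indicator_def)
  then show ?thesis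
    by simp
qed

lemma tendsto_mehler_indicator_nbhd:
  fixes A :: "'a::euclidean_space set"
  assumes [measurable]: "A \<in> sets borel" and "e \<longlonglongrightarrow> 0" and "\<And>n. 0 \<le> e n"
  shows "(\<lambda>n. mehler \<theta> (indicator (nbhd A (\<delta> + e n) - A)) x) \<longlonglongrightarrow> mehler \<theta> (indicator (nbhd A \<delta> - A)) x"
proof -
  let ?p = "\<lambda>z. cos \<theta> *\<^sub>R x + sin \<theta> *\<^sub>R z"
  have lim: "AE z in gauss. (\<lambda>n. indicator (nbhd A (\<delta> + e n) - A) (?p z) :: real)
      \<longlonglongrightarrow> indicator (nbhd A \<delta> - A) (?p z)"
    by (rule AE_I2) (rule tendsto_indicator_nbhd[OF assms(2,3)])
  have bound: "AE z in gauss. norm (indicator (nbhd A (\<delta> + e n) - A) (?p z) :: real) \<le> 1" for n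
    by (simp add: indicator_def)
  have meas: "(\<lambda>z. indicator (nbhd A c - A) (?p z) :: real) \<in> borel_measurable gauss" for c
    using measurable_compose[OF _ borel_measurable_indicator_nbhd_diff[OF assms(1)], of ?p borel c]
    by simp
  have "(\<lambda>n. \<integral>z. indicator (nbhd A (\<delta> + e n) - A) (?p z) \<partial>gauss)
      \<longlonglongrightarrow> ((\<integral>z. indicator (nbhd A \<delta> - A) (?p z) \<partial>gauss) :: real)"
    by (rule integral_dominated_convergence[OF meas meas gauss.integrable_const lim bound])
  then show ?thesis
    unfolding mehler_def .
qed

lemma mehler_indicator_nonneg: "0 \<le> mehler \<theta> (indicator S) x"
  unfolding mehler_def by (rule Bochner_Integration.integral_nonneg) simp

lemma le_of_sq_le_mult:
  fixes a c :: real
  assumes "a\<^sup>2 \<le> a * c" and "0 \<le> a" and "0 \<le> c"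
  shows "a \<le> c"
proof (cases "a = 0")
  case False
  with assms show ?thesis
    by (simp add: power2_eq_square mult_le_cancel_left_pos)
qed (use assms in simp)

lemma norm_mehler_grad_cutoff_le:
  fixes A :: "'a::euclidean_space set"
  assumes [measurable]: "A \<in> sets borel" and "A \<noteq> {}" and "0 < \<delta>" and "sin \<theta> \<noteq> 0"
  shows "norm (mehler_grad \<theta> (cutoff A \<delta>) x) \<le> \<bar>cos \<theta>\<bar> / \<delta> * mehler \<theta> (indicator (nbhd A \<delta> - A)) x"
proof -
  let ?u = "mehler \<theta> (cutoff A \<delta>)"
  let ?g = "mehler_grad \<theta> (cutoff A \<delta>) x"
  let ?P = "\<lambda>c. mehler \<theta> (indicator (nbhd A c - A)) x"
  define h where "h n = inverse (real (Suc n))" for n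
  define e where "e n = \<bar>cos \<theta>\<bar> * (h n * norm ?g)" for n
  have h_pos: "0 < h n" for n
    unfolding h_def by simp
  have "h \<longlonglongrightarrow> 0"
    unfolding h_def by (rule LIMSEQ_inverse_real_of_nat)
  then have h_at: "filterlim h (at 0) sequentially"
    using h_pos by (auto simp: filterlim_at less_imp_neq[symmetric])
  have "e \<longlonglongrightarrow> \<bar>cos \<theta>\<bar> * (0 * norm ?g)"
    unfolding e_def by (intro tendsto_intros \<open>h \<longlonglongrightarrow> 0\<close>)
  then have "e \<longlonglongrightarrow> 0"
    by simp
  then have band_lim: "(\<lambda>n. ?P (\<delta> + e n)) \<longlonglongrightarrow> ?P \<delta>"
    by (rule tendsto_mehler_indicator_nbhd[OF assms(1)]) (simp add: e_def h_pos less_imp_le)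
  \<comment> \<open>Differentiate along the gradient itself: the derivative is \<open>|g|\<^sup>2\<close>, while each difference
    quotient is controlled by the boundary layer of width \<open>\<delta> + e n\<close>.\<close>
  have "((\<lambda>s. ?u (x + s *\<^sub>R ?g)) has_real_derivative ?g \<bullet> ?g) (at 0)"
    by (rule has_real_derivative_mehler[where B=1]) (simp_all add: abs_cutoff_le assms)
  then have "((\<lambda>s. (?u (x + s *\<^sub>R ?g) - ?u x) / s) \<longlongrightarrow> (norm ?g)\<^sup>2) (at 0)"
    by (simp add: DERIV_def power2_norm_eq_inner)
  then have quotient_lim: "(\<lambda>n. (?u (x + h n *\<^sub>R ?g) - ?u x) / h n) \<longlonglongrightarrow> (norm ?g)\<^sup>2"
    by (rule filterlim_compose[OF _ h_at])
  have quotient_le: "(?u (x + h n *\<^sub>R ?g) - ?u x) / h n \<le> \<bar>cos \<theta>\<bar> / \<delta> * norm ?g * ?P (\<delta> + e n)" for n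
  proof -
    have "?u (x + h n *\<^sub>R ?g) - ?u x \<le> h n * (\<bar>cos \<theta>\<bar> / \<delta> * norm ?g * ?P (\<delta> + e n))"
      using mehler_cutoff_increment_le[OF assms(1,3,2), of \<theta> x "h n *\<^sub>R ?g"] h_pos[of n]
      by (simp add: e_def mult_ac)
    then show ?thesis
      using h_pos[of n] by (simp add: divide_le_eq mult.commute)
  qed
  have "(norm ?g)\<^sup>2 \<le> \<bar>cos \<theta>\<bar> / \<delta> * norm ?g * ?P \<delta>"
    by (rule LIMSEQ_le[OF quotient_lim tendsto_mult_left[OF band_lim]]) (use quotient_le in auto)
  then have "(norm ?g)\<^sup>2 \<le> norm ?g * (\<bar>cos \<theta>\<bar> / \<delta> * ?P \<delta>)"
    by (simp add: mult_ac)
  then show ?thesis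
    by (rule le_of_sq_le_mult) (use mehler_indicator_nonneg[of \<theta> "nbhd A \<delta> - A" x] assms(3) in simp_all)
qed

lemma integral_abs_inner_mehler_grad_cutoff_le:
  fixes A :: "'a::euclidean_space set"
  assumes [measurable]: "A \<in> sets borel" and "A \<noteq> {}" and "0 < \<delta>" and "sin \<theta> \<noteq> 0"
  shows "(\<integral>p. \<bar>snd p \<bullet> mehler_grad \<theta> (cutoff A \<delta>) (fst p)\<bar> \<partial>gauss_pair)
    \<le> measure gauss (nbhd A \<delta> - A) / \<delta>"
proof -
  let ?g = "mehler_grad \<theta> (cutoff A \<delta>)"
  let ?P = "mehler \<theta> (indicator (nbhd A \<delta> - A))"
  have P_le: "\<bar>?P x\<bar> \<le> 1" for x
    by (rule abs_mehler_le[OF _ abs_indicator_le_1]) simp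
  have grad_le: "norm (?g x) \<le> ?P x / \<delta>" for x
  proof -
    have "\<bar>cos \<theta>\<bar> / \<delta> * ?P x \<le> 1 / \<delta> * ?P x"
      using assms(3) mehler_indicator_nonneg[of \<theta> "nbhd A \<delta> - A" x]
      by (intro mult_right_mono divide_right_mono) simp_all
    then show ?thesis
      using norm_mehler_grad_cutoff_le[OF assms, of x] by simp
  qed
  have inner_le: "\<bar>z \<bullet> ?g x\<bar> \<le> norm z * (1 / \<delta>)" for x z
  proof -
    have "?P x / \<delta> \<le> 1 / \<delta>"
      using P_le[of x] assms(3) by (intro divide_right_mono) (auto simp: abs_le_iff)
    then have "norm (?g x) \<le> 1 / \<delta>"
      using grad_le[of x] by linarith
    have "\<bar>z \<bullet> ?g x\<bar> \<le> norm z * norm (?g x)"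
      by (rule Cauchy_Schwarz_ineq2)
    also have "\<dots> \<le> norm z * (1 / \<delta>)"
      using \<open>norm (?g x) \<le> 1 / \<delta>\<close> by (rule mult_left_mono) simp
    finally show ?thesis .
  qed
  have "integrable gauss_pair (\<lambda>p::'a \<times> 'a. norm (snd p) * (1 / \<delta>))"
    by (rule integrable_mult_left) (rule integrable_gauss_pair_norm(2))
  then have int: "integrable gauss_pair (\<lambda>p. \<bar>snd p \<bullet> ?g (fst p)\<bar>)"
    by (rule Bochner_Integration.integrable_bound) (use inner_le assms(3) in auto)
  have "(\<integral>p. \<bar>snd p \<bullet> ?g (fst p)\<bar> \<partial>gauss_pair) = (\<integral>x. (\<integral>z. \<bar>z \<bullet> ?g x\<bar> \<partial>gauss) \<partial>gauss)"
    using gauss_pair.integral_fst'[OF int] by simp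
  also have "\<dots> \<le> (\<integral>x. ?P x / \<delta> \<partial>gauss)"
  proof (rule Bochner_Integration.integral_mono)
    show "integrable gauss (\<lambda>x. \<integral>z. \<bar>z \<bullet> ?g x\<bar> \<partial>gauss)"
      using gauss_pair.integrable_fst'[OF int] by simp
    show "integrable gauss (\<lambda>x. ?P x / \<delta>)"
      by (intro integrable_divide integrable_gauss_bounded[OF _ P_le]) simp
    show "(\<integral>z. \<bar>z \<bullet> ?g x\<bar> \<partial>gauss) \<le> ?P x / \<delta>" for x
      using integral_gauss_abs_inner_le[of "?g x"] grad_le[of x] by (simp add: inner_commute)
  qed
  also have "\<dots> = (\<integral>x. indicator (nbhd A \<delta> - A) x \<partial>gauss) / \<delta>"
    using integral_mehler[of "indicator (nbhd A \<delta> - A)" 1 \<theta>] by (simp add: abs_indicator_le_1)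
  finally show ?thesis
    by simp
qed

lemma rot_modulus_mehler_cutoff_le:
  fixes A :: "'a::euclidean_space set"
  assumes [measurable]: "A \<in> sets borel" and "A \<noteq> {}" and "0 < \<delta>" and "sin \<theta> \<noteq> 0" and "0 \<le> \<phi>"
  shows "rot_modulus \<phi> (mehler \<theta> (cutoff A \<delta>)) \<le> \<phi> / \<delta> * measure gauss (nbhd A \<delta> - A)"
proof -
  let ?g = "mehler_grad \<theta> (cutoff A \<delta>)"
  have "rot_modulus \<phi> (mehler \<theta> (cutoff A \<delta>)) \<le> \<phi> * (\<integral>p. \<bar>snd p \<bullet> ?g (fst p)\<bar> \<partial>gauss_pair)"
  proof (rule rot_modulus_le_integral_directional_derivative[where L="1 / \<delta>" and B=1])
    show "(1 / \<delta>)-lipschitz_on UNIV (mehler \<theta> (cutoff A \<delta>))"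
      by (rule lipschitz_mehler[OF lipschitz_cutoff[OF assms(3)] abs_cutoff_le[OF assms(3)]])
    show "\<bar>mehler \<theta> (cutoff A \<delta>) x\<bar> \<le> 1" for x
      by (rule abs_mehler_le[OF _ abs_cutoff_le[OF assms(3)]]) simp
    show "((\<lambda>h. mehler \<theta> (cutoff A \<delta>) (x + h *\<^sub>R z)) has_real_derivative z \<bullet> ?g x) (at 0)" for x z
      by (rule has_real_derivative_mehler[OF _ abs_cutoff_le[OF assms(3)] assms(4)]) simp
  qed (rule assms(5))
  also have "\<dots> \<le> \<phi> * (measure gauss (nbhd A \<delta> - A) / \<delta>)"
    by (rule mult_left_mono[OF integral_abs_inner_mehler_grad_cutoff_le[OF assms(1-4)] assms(5)])
  finally show ?thesis
    by simp
qed

section \<open>Gaussian surface area and the rotation modulus of an indicator\<close>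

lemma rot_modulus_indicator_le:
  fixes A :: "'a::euclidean_space set"
  assumes [measurable]: "A \<in> sets borel" and "A \<noteq> {}" and "0 < \<delta>" and "0 \<le> \<phi>"
  shows "rot_modulus \<phi> (indicator A) \<le> \<phi> / \<delta> * measure gauss (nbhd A \<delta> - A) + 2 * measure gauss (nbhd A \<delta> - A)"
proof -
  let ?m = "measure gauss (nbhd A \<delta> - A)"
  let ?h = "cutoff A \<delta>"
  \<comment> \<open>\<open>\<theta>\<close> is an auxiliary smoothing angle; the error it causes vanishes as \<open>\<theta> \<rightarrow> 0\<close>.\<close>
  define bound where "bound \<theta> = \<phi> / \<delta> * ?m + 2 * ?m
    + 2 * (1 / \<delta> * (\<bar>1 - cos \<theta>\<bar> + \<bar>sin \<theta>\<bar>) * (\<integral>x. norm x \<partial>(gauss :: 'a measure)))" for \<theta>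
  have h_le: "\<bar>?h x\<bar> \<le> 1" for x
    by (rule abs_cutoff_le[OF assms(3)])
  have u_le: "\<bar>mehler \<theta> ?h x\<bar> \<le> 1" for \<theta> x
    by (rule abs_mehler_le[OF _ h_le]) simp
  have "rot_modulus \<phi> (indicator A) \<le> bound \<theta>" if "0 < \<theta>" "\<theta> < pi" for \<theta>
  proof -
    have "rot_modulus \<phi> (indicator A) \<le> rot_modulus \<phi> ?h + 2 * (\<integral>x. \<bar>indicator A x - ?h x\<bar> \<partial>gauss)"
      by (rule rot_modulus_le_rot_modulus_add[OF _ _ abs_indicator_le_1 h_le]) simp_all
    also have "(\<integral>x. \<bar>indicator A x - ?h x\<bar> \<partial>gauss) \<le> ?m"
      by (rule integral_abs_indicator_minus_cutoff_le[OF assms(1,3,2)])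
    also have "rot_modulus \<phi> ?h \<le> rot_modulus \<phi> (mehler \<theta> ?h) + 2 * (\<integral>x. \<bar>?h x - mehler \<theta> ?h x\<bar> \<partial>gauss)"
      by (rule rot_modulus_le_rot_modulus_add[OF _ _ h_le u_le]) simp_all
    also have "rot_modulus \<phi> (mehler \<theta> ?h) \<le> \<phi> / \<delta> * ?m"
      using that sin_gt_zero[of \<theta>] by (intro rot_modulus_mehler_cutoff_le assms) simp_all
    also have "(\<integral>x. \<bar>?h x - mehler \<theta> ?h x\<bar> \<partial>gauss) = (\<integral>x. \<bar>mehler \<theta> ?h x - ?h x\<bar> \<partial>gauss)"
      by (simp add: abs_minus_commute)
    also have "\<dots> \<le> rot_modulus \<theta> ?h"
      by (rule integral_abs_mehler_minus_le_rot_modulus[OF _ h_le]) simp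
    also have "\<dots> \<le> 1 / \<delta> * (\<bar>1 - cos \<theta>\<bar> + \<bar>sin \<theta>\<bar>) * (\<integral>x. norm x \<partial>(gauss :: 'a measure))"
      by (rule rot_modulus_lipschitz_le[OF lipschitz_cutoff[OF assms(3)] h_le])
    finally show ?thesis
      unfolding bound_def by (simp add: algebra_simps)
  qed
  then have "\<forall>\<^sub>F \<theta> in at_right 0. rot_modulus \<phi> (indicator A) \<le> bound \<theta>"
    unfolding eventually_at_right_field by (intro exI[of _ pi]) auto
  moreover have "(bound \<longlongrightarrow> \<phi> / \<delta> * ?m + 2 * ?m) (at_right 0)"
  proof -
    have "(bound \<longlongrightarrow> \<phi> / \<delta> * ?m + 2 * ?m
        + 2 * (1 / \<delta> * (\<bar>1 - cos 0\<bar> + \<bar>sin 0\<bar>) * (\<integral>x. norm x \<partial>(gauss :: 'a measure)))) (at_right 0)"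
      unfolding bound_def by (intro tendsto_intros)
    then show ?thesis
      by simp
  qed
  ultimately show ?thesis
    by (intro tendsto_le[OF trivial_limit_at_right_real _ tendsto_const]) auto
qed

lemma gsurf_nonneg: "0 \<le> gsurf A"
  unfolding gsurf_def
  by (rule Liminf_bounded) (auto simp: eventually_at_right_field intro!: exI[of _ 1])

lemma obtain_nbhd_ratio_less:
  fixes A :: "'a::euclidean_space set"
  assumes "gsurf A < ereal B" and "0 < \<delta>0"
  obtains \<delta> where "0 < \<delta>" "\<delta> < \<delta>0" "measure gauss (nbhd A \<delta> - A) / \<delta> < B"
proof (rule ccontr)
  assume "\<not> thesis"
  with that have "B \<le> measure gauss (nbhd A \<delta> - A) / \<delta>" if "0 < \<delta>" "\<delta> < \<delta>0" for \<delta>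
    using \<open>0 < \<delta>\<close> \<open>\<delta> < \<delta>0\<close> by (meson not_le)
  then have "\<forall>\<^sub>F \<delta> in at_right 0. ereal B \<le> ereal (measure gauss (nbhd A \<delta> - A) / \<delta>)"
    unfolding eventually_at_right_field using assms(2) by (intro exI[of _ \<delta>0]) auto
  then have "ereal B \<le> gsurf A"
    unfolding gsurf_def by (rule Liminf_bounded)
  with assms(1) show False
    by simp
qed

lemma rot_modulus_indicator_le_gsurf:
  fixes A :: "'a::euclidean_space set"
  assumes [measurable]: "A \<in> sets borel" and surf: "gsurf A \<le> ereal B" and "0 \<le> \<phi>"
  shows "rot_modulus \<phi> (indicator A) \<le> \<phi> * B"
proof -
  have B: "0 \<le> B"
    using order_trans[OF gsurf_nonneg surf] by simp
  show ?thesis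
  proof (cases "A = {}")
    case True
    then show ?thesis
      using B assms(3) by (simp add: rot_modulus_def)
  next
    case False
    show ?thesis
    proof (rule field_le_epsilon)
      fix e :: real
      assume e: "0 < e"
      define B' where "B' = B + e / (2 * (\<phi> + 1))"
      have "0 < e / (2 * (\<phi> + 1))"
        using e assms(3) by simp
      then have B': "B < B'" "0 < B'"
        unfolding B'_def using B by simp_all
      have "gsurf A < ereal B'"
        using le_less_trans[OF surf] B'(1) by simp
      moreover have "0 < e / (4 * B')"
        using e B'(2) by simp
      ultimately obtain \<delta> where \<delta>: "0 < \<delta>" "\<delta> < e / (4 * B')"
        and ratio: "measure gauss (nbhd A \<delta> - A) / \<delta> < B'"
        by (rule obtain_nbhd_ratio_less)
      let ?m = "measure gauss (nbhd A \<delta> - A)"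
      have m: "?m \<le> B' * \<delta>"
        using ratio \<delta>(1) by (simp add: divide_less_eq less_imp_le)
      have "rot_modulus \<phi> (indicator A) \<le> \<phi> / \<delta> * ?m + 2 * ?m"
        by (rule rot_modulus_indicator_le[OF assms(1) False \<delta>(1) assms(3)])
      also have "\<dots> = \<phi> * (?m / \<delta>) + 2 * ?m"
        by simp
      also have "\<dots> \<le> \<phi> * B' + 2 * (B' * \<delta>)"
        using ratio m assms(3) by (intro add_mono mult_left_mono) simp_all
      also have "\<phi> * B' \<le> \<phi> * B + e / 2"
        unfolding B'_def using assms(3) e by (simp add: distrib_left field_simps)
      also have "2 * (B' * \<delta>) \<le> e / 2"
        using \<delta>(2) B'(2) by (simp add: field_simps)
      finally show "rot_modulus \<phi> (indicator A) \<le> \<phi> * B + e"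
        by simp
    qed
  qed
qed

lemma rot_modulus_affine:
  "rot_modulus \<theta> (\<lambda>x. a * k x + b) = \<bar>a\<bar> * rot_modulus \<theta> k"
proof -
  have "\<bar>(a * k y + b) - (a * k x + b)\<bar> = \<bar>a\<bar> * \<bar>k y - k x\<bar>" for x y
    by (simp flip: abs_mult add: right_diff_distrib)
  then show ?thesis
    unfolding rot_modulus_def by simp
qed

lemma integral_abs_diff_triangle:
  fixes f g h :: "'a \<Rightarrow> real"
  assumes "integrable M f" "integrable M g" "integrable M h"
  shows "(\<integral>x. \<bar>f x - h x\<bar> \<partial>M) \<le> (\<integral>x. \<bar>f x - g x\<bar> \<partial>M) + (\<integral>x. \<bar>g x - h x\<bar> \<partial>M)"
proof -
  have "(\<integral>x. \<bar>f x - h x\<bar> \<partial>M) \<le> (\<integral>x. \<bar>f x - g x\<bar> + \<bar>g x - h x\<bar> \<partial>M)"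
    using assms by (intro Bochner_Integration.integral_mono) auto
  also have "\<dots> = (\<integral>x. \<bar>f x - g x\<bar> \<partial>M) + (\<integral>x. \<bar>g x - h x\<bar> \<partial>M)"
    using assms by (intro Bochner_Integration.integral_add) auto
  finally show ?thesis .
qed

lemma integral_abs_OU_minus_le:
  fixes f :: "'a::euclidean_space \<Rightarrow> real"
  assumes "0 \<le> t" and [measurable]: "f \<in> borel_measurable borel" and f: "\<forall>x. f x \<in> {-1, 1}"
    and "smooth \<eta> s f"
  shows "(\<integral>x. \<bar>OU t f x - f x\<bar> \<partial>gauss) \<le> 2 * \<eta> + 2 * arccos (exp (- t)) * (s * (1 + \<eta>))"
proof -
  obtain g where g_meas [measurable]: "g \<in> borel_measurable borel" and g: "\<forall>x. g x \<in> {-1, 1}"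
    and fg: "(\<integral>x. \<bar>f x - g x\<bar> \<partial>gauss) \<le> \<eta>" and surf: "surf g \<le> ereal (s * (1 + \<eta>))"
    using assms(4) unfolding smooth_def by blast
  define \<theta> where "\<theta> = arccos (exp (- t))"
  define A where "A = {x. g x = 1}"
  have [measurable]: "A \<in> sets borel"
    unfolding A_def by measurable
  have f_le: "\<bar>f x\<bar> \<le> 1" and g_le: "\<bar>g x\<bar> \<le> 1" for x
    using f[rule_format, of x] g[rule_format, of x] by auto
  have g_eq: "g = (\<lambda>x. 2 * indicator A x - 1)"
  proof
    show "g x = 2 * indicator A x - 1" for x
      using g[rule_format, of x] by (auto simp: A_def)
  qed
  have \<theta>: "0 \<le> \<theta>"
    unfolding \<theta>_def using assms(1) by (intro arccos_lbound) (simp_all add: order_trans[OF _ less_imp_le[OF exp_gt_zero]])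
  have int: "integrable gauss k" if "k \<in> borel_measurable borel" "\<And>x. \<bar>k x\<bar> \<le> 1" for k :: "'a \<Rightarrow> real"
    by (rule integrable_gauss_bounded[where k=k, OF that])
  have "(\<integral>x. \<bar>OU t f x - f x\<bar> \<partial>gauss)
      \<le> (\<integral>x. \<bar>mehler \<theta> f x - mehler \<theta> g x\<bar> \<partial>gauss) + (\<integral>x. \<bar>mehler \<theta> g x - g x\<bar> \<partial>gauss)
        + (\<integral>x. \<bar>g x - f x\<bar> \<partial>gauss)"
    unfolding OU_eq_mehler[OF assms(1)] \<theta>_def[symmetric]
    using integral_abs_diff_triangle[of gauss "mehler \<theta> f" "mehler \<theta> g" "g"]
      integral_abs_diff_triangle[of gauss "mehler \<theta> f" g f]
    by (simp add: int abs_mehler_le f_le g_le)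
  also have "(\<integral>x. \<bar>mehler \<theta> f x - mehler \<theta> g x\<bar> \<partial>gauss) \<le> \<eta>"
    using integral_abs_mehler_diff_le[OF assms(2) g_meas f_le g_le, of \<theta>] fg by simp
  also have "(\<integral>x. \<bar>mehler \<theta> g x - g x\<bar> \<partial>gauss) \<le> rot_modulus \<theta> g"
    by (rule integral_abs_mehler_minus_le_rot_modulus[OF _ g_le]) simp
  also have "rot_modulus \<theta> g = 2 * rot_modulus \<theta> (indicator A)"
    unfolding g_eq by (simp add: rot_modulus_affine[where b="-1", simplified])
  also have "rot_modulus \<theta> (indicator A) \<le> \<theta> * (s * (1 + \<eta>))"
    using surf \<theta> by (intro rot_modulus_indicator_le_gsurf) (simp_all add: surf_def A_def)
  also have "(\<integral>x. \<bar>g x - f x\<bar> \<partial>gauss) \<le> \<eta>"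
    using fg by (simp add: abs_minus_commute)
  finally show ?thesis
    unfolding \<theta>_def by simp
qed

lemma mult_cos_le_sin: "0 \<le> u \<Longrightarrow> u \<le> pi \<Longrightarrow> u * cos u \<le> sin u"
proof -
  assume u: "0 \<le> u" "u \<le> pi"
  let ?g = "\<lambda>x. sin x - x * cos x"
  have "?g 0 \<le> ?g u"
  proof (rule DERIV_nonneg_imp_nondecreasing[OF u(1)])
    fix x
    assume x: "0 \<le> x" "x \<le> u"
    have "(?g has_real_derivative (x * sin x)) (at x)"
      by (auto intro!: derivative_eq_intros simp: algebra_simps)
    moreover have "0 \<le> x * sin x"
      using x u by (intro mult_nonneg_nonneg sin_ge_zero) auto
    ultimately show "\<exists>y. (?g has_real_derivative y) (at x) \<and> 0 \<le> y"
      by blast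
  qed
  then show ?thesis
    by simp
qed

lemma cos_le_exp_neg_sq: "0 \<le> u \<Longrightarrow> u \<le> pi / 2 \<Longrightarrow> cos u \<le> exp (- u\<^sup>2 / 2)"
proof -
  assume u: "0 \<le> u" "u \<le> pi / 2"
  let ?f = "\<lambda>x. exp (x\<^sup>2 / 2) * cos x"
  have "?f u \<le> ?f 0"
  proof (rule DERIV_nonpos_imp_nonincreasing[OF u(1)])
    fix x
    assume x: "0 \<le> x" "x \<le> u"
    have "(?f has_real_derivative (exp (x\<^sup>2 / 2) * (x * cos x - sin x))) (at x)"
      by (auto intro!: derivative_eq_intros simp: algebra_simps power2_eq_square)
    moreover have "exp (x\<^sup>2 / 2) * (x * cos x - sin x) \<le> 0"
      using mult_cos_le_sin[of x] x u by (intro mult_nonneg_nonpos) auto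
    ultimately show "\<exists>y. (?f has_real_derivative y) (at x) \<and> y \<le> 0"
      by blast
  qed
  then have "exp (- u\<^sup>2 / 2) * (exp (u\<^sup>2 / 2) * cos u) \<le> exp (- u\<^sup>2 / 2) * 1"
    by (intro mult_left_mono) auto
  then show ?thesis
    by (simp add: mult.assoc[symmetric] exp_add[symmetric])
qed

lemma arccos_exp_le_sqrt: "0 \<le> t \<Longrightarrow> arccos (exp (- t)) \<le> sqrt (2 * t)"
proof -
  assume t: "0 \<le> t"
  have e: "0 < exp (- t)" "exp (- t) \<le> 1"
    using t by auto
  show ?thesis
  proof (cases "sqrt (2 * t) \<le> pi / 2")
    case True
    have "cos (sqrt (2 * t)) \<le> exp (- t)"
      using cos_le_exp_neg_sq[OF _ True] t by simp
    then have "arccos (exp (- t)) \<le> arccos (cos (sqrt (2 * t)))"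
      by (intro arccos_le_arccos) (use e in auto)
    also have "arccos (cos (sqrt (2 * t))) = sqrt (2 * t)"
      using True pi_gt_zero t by (intro arccos_cos) (simp, linarith)
    finally show ?thesis .
  next
    case False
    have "arccos (exp (- t)) \<le> arccos 0"
      by (intro arccos_le_arccos) (use e in auto)
    then show ?thesis
      using False by simp
  qed
qed

lemma integral_sq_le_integral_abs:
  fixes h :: "'a::euclidean_space \<Rightarrow> real"
  assumes [measurable]: "h \<in> borel_measurable borel" and bounded: "\<And>x. \<bar>h x\<bar> \<le> C"
  shows "(\<integral>x. (h x)\<^sup>2 \<partial>gauss) \<le> C * (\<integral>x. \<bar>h x\<bar> \<partial>gauss)"
proof -
  have sq_le: "(h x)\<^sup>2 \<le> C * \<bar>h x\<bar>" for x
  proof -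
    have "(h x)\<^sup>2 = \<bar>h x\<bar> * \<bar>h x\<bar>"
      by (simp add: power2_eq_square)
    also have "\<dots> \<le> C * \<bar>h x\<bar>"
      by (rule mult_right_mono[OF bounded abs_ge_zero])
    finally show ?thesis .
  qed
  have "\<bar>(h x)\<^sup>2\<bar> \<le> C * C" for x
    using order_trans[OF sq_le mult_left_mono[OF bounded]] order_trans[OF abs_ge_zero bounded] by simp
  then have "integrable gauss (\<lambda>x. (h x)\<^sup>2)"
    by (rule integrable_gauss_bounded[rotated]) measurable
  moreover have "integrable gauss (\<lambda>x. C * \<bar>h x\<bar>)"
    by (intro integrable_mult_right integrable_gauss_bounded[where B=C]) (simp_all add: bounded)
  ultimately have "(\<integral>x. (h x)\<^sup>2 \<partial>gauss) \<le> (\<integral>x. C * \<bar>h x\<bar> \<partial>gauss)"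
    using sq_le by (intro Bochner_Integration.integral_mono)
  then show ?thesis
    by simp
qed

lemma integral_sq_OU_minus_le:
  fixes f :: "'a::euclidean_space \<Rightarrow> real"
  assumes "0 \<le> t" and [measurable]: "f \<in> borel_measurable borel" and f: "\<forall>x. f x \<in> {-1, 1}"
    and "smooth \<eta> s f"
  shows "(\<integral>x. (OU t f x - f x)\<^sup>2 \<partial>gauss)
    \<le> 2 * min 2 (2 * \<eta> + 2 * arccos (exp (- t)) * (s * (1 + \<eta>)))"
proof -
  define \<theta> where "\<theta> = arccos (exp (- t))"
  define I where "I = (\<integral>x. \<bar>OU t f x - f x\<bar> \<partial>gauss)"
  have f_le: "\<bar>f x\<bar> \<le> 1" for x
    using f[rule_format, of x] by auto
  have diff_le: "\<bar>mehler \<theta> f x - f x\<bar> \<le> 2" for x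
    using abs_diff_le_twice[OF abs_mehler_le[OF assms(2) f_le] f_le] by simp
  have "(\<integral>x. (OU t f x - f x)\<^sup>2 \<partial>gauss) \<le> 2 * I"
    unfolding I_def OU_eq_mehler[OF assms(1)] \<theta>_def[symmetric]
    by (rule integral_sq_le_integral_abs[OF _ diff_le]) measurable
  moreover have "integrable gauss (\<lambda>x. \<bar>mehler \<theta> f x - f x\<bar>)"
    by (rule integrable_gauss_bounded[where B=2]) (measurable, simp add: diff_le)
  then have "I \<le> 2"
    unfolding I_def OU_eq_mehler[OF assms(1)] \<theta>_def[symmetric] using diff_le
    by (intro gauss.integral_le_const AE_I2) simp_all
  moreover have "I \<le> 2 * \<eta> + 2 * \<theta> * (s * (1 + \<eta>))"
    unfolding I_def \<theta>_def by (rule integral_abs_OU_minus_le[OF assms])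
  ultimately have "(\<integral>x. (OU t f x - f x)\<^sup>2 \<partial>gauss) \<le> 2 * I" "I \<le> min 2 (2 * \<eta> + 2 * \<theta> * (s * (1 + \<eta>)))"
    by simp_all
  then show ?thesis
    unfolding \<theta>_def by (meson mult_left_mono order_trans zero_le_numeral)
qed

lemma arccos_exp_mult_le:
  assumes "0 < \<epsilon>" and "0 < s"
  shows "arccos (exp (- (\<epsilon> ^ 4 / (900 * s\<^sup>2)))) * s \<le> sqrt 2 * \<epsilon>\<^sup>2 / 30"
proof -
  let ?t = "\<epsilon> ^ 4 / (900 * s\<^sup>2)"
  have "2 * ?t = (sqrt 2 * \<epsilon>\<^sup>2 / (30 * s))\<^sup>2"
    using assms(2) by (simp add: field_simps)
  then have "sqrt (2 * ?t) = sqrt 2 * \<epsilon>\<^sup>2 / (30 * s)"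
    using assms by simp
  then have "arccos (exp (- ?t)) * s \<le> (sqrt 2 * \<epsilon>\<^sup>2 / (30 * s)) * s"
    using arccos_exp_le_sqrt[of ?t] assms(2) by (intro mult_right_mono) simp_all
  also have "\<dots> = sqrt 2 * \<epsilon>\<^sup>2 / 30"
    using assms(2) by simp
  finally show ?thesis .
qed

lemma smooth_bound_le_eps_sq:
  assumes "0 < \<epsilon>" and "0 < s"
  shows "2 * min 2 (2 * (\<epsilon> / 30)\<^sup>2 + 2 * arccos (exp (- (\<epsilon> ^ 4 / (900 * s\<^sup>2)))) * (s * (1 + (\<epsilon> / 30)\<^sup>2)))
    \<le> \<epsilon>\<^sup>2 / 5"
proof -
  define \<theta> where "\<theta> = arccos (exp (- (\<epsilon> ^ 4 / (900 * s\<^sup>2))))"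
  define P where "P = \<theta> * s * (1 + (\<epsilon> / 30)\<^sup>2)"
  define m where "m = min 2 (2 * (\<epsilon> / 30)\<^sup>2 + 2 * \<theta> * (s * (1 + (\<epsilon> / 30)\<^sup>2)))"
  have m_le: "m \<le> 2" "m \<le> 2 * (\<epsilon> / 30)\<^sup>2 + 2 * P"
    unfolding m_def P_def by (simp_all add: mult_ac)
  have eta: "(\<epsilon> / 30)\<^sup>2 = \<epsilon>\<^sup>2 / 900"
    by (simp add: power_divide)
  have "2 * m \<le> \<epsilon>\<^sup>2 / 5"
  proof (cases "\<epsilon>\<^sup>2 \<le> 20")
    case True
    have "sqrt 2 < (1415 / 1000 :: real)"
      by (rule real_less_lsqrt) (simp_all add: power2_eq_square)
    then have "sqrt 2 * \<epsilon>\<^sup>2 / 30 \<le> 1415 / 1000 * \<epsilon>\<^sup>2 / 30"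
      by (intro divide_right_mono mult_right_mono) simp_all
    then have "\<theta> * s \<le> 1415 / 1000 * \<epsilon>\<^sup>2 / 30"
      using arccos_exp_mult_le[OF assms] unfolding \<theta>_def by linarith
    then have "P \<le> (1415 / 1000 * \<epsilon>\<^sup>2 / 30) * (1 + 20 / 900)"
      unfolding P_def using True by (intro mult_mono) (simp_all add: power_divide)
    then have "P * 135000 \<le> 6509 * \<epsilon>\<^sup>2"
      by simp
    with m_le eta zero_le_power2[of \<epsilon>] show ?thesis
      by linarith
  next
    case False
    with m_le show ?thesis
      by linarith
  qed
  then show ?thesis
    unfolding m_def \<theta>_def .
qed

theorem proposition3p9:
  fixes f :: "'a::euclidean_space \<Rightarrow> real" and \<epsilon> s t :: real
  assumes "\<epsilon> > 0" and "s > 0" and "t = \<epsilon> ^ 4 / (900 * s\<^sup>2)"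
    and "f \<in> borel_measurable borel" and "\<forall>x. f x \<in> {-1, 1}"
    and "smooth ((\<epsilon> / 30)\<^sup>2) s f"
  shows "(\<integral>x. (OU t f x - f x)\<^sup>2 \<partial>gauss) \<le> \<epsilon>\<^sup>2 / 5"
proof -
  have "0 \<le> t"
    using assms(3) by simp
  then have "(\<integral>x. (OU t f x - f x)\<^sup>2 \<partial>gauss)
      \<le> 2 * min 2 (2 * (\<epsilon> / 30)\<^sup>2 + 2 * arccos (exp (- t)) * (s * (1 + (\<epsilon> / 30)\<^sup>2)))"
    by (rule integral_sq_OU_minus_le[OF _ assms(4-6)])
  also have "\<dots> \<le> \<epsilon>\<^sup>2 / 5"
    unfolding assms(3) by (rule smooth_bound_le_eps_sq[OF assms(1,2)])
  finally show ?thesis .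
qed

end
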